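(* Let $f$ be a germ of a holomorphic self-map of $\mathbb{C}^2$ tangent to the identity at a fixed point $p$, of order $k+1$, with characteristic direction $[v]$ such that: (1) $[v]$ is a characteristic direction of degree $s\le\infty$; (2) $[v]$ is non-degenerate of degree $r+1$ with $k<r<s$; (3) $[v]$ is of order one in degree $t+1$ with $k\le t\le r$. Then $f^{-1}$ also satisfies (1)–(3) with respect to $[v]$ with the same $k,r,s,t$. If $r=t$, then $[v]$ is transversally attracting for $f$ if and only if it is transversally attracting for $f^{-1}$. If $r=2t$, then $[v]$ is transversally attracting for $f$ or for $f^{-1}$ (or both).
   Context: Tangent to the identity at $p$: $df_p=\mathrm{Id}$. With $p=0$, $f(x)=x+\sum_{j\ge k+1}P_j(x)$, $P_j$ homogeneous of degree $j$, $P_{k+1}\not\equiv0$; $k+1$ is the order. $[v]$ is a characteristic direction of a homogeneous map $Q$ if $Q(v)=\lambda v$ ($v\neq0$); degenerate if $\lambda=0$, non-degenerate if $\lambda\ne0$. Degree $s$: characteristic direction of $P_{k+1},\dots,P_s$. Non-degenerate of degree $r+1$: degenerate for $P_{k+1},\dots,P_r$, non-degenerate for $P_{r+1}$. In linear coordinates $(z,w)$ with $[v]=[1:0]$ and $P_j=(p_j,q_j)$, $l_j$ is the order of vanishing of $q_j(1,u)$ at $u=0$; order one in degree $t+1$ means $l_{t+1}=1<l_j$ for $k+1\le j\le t$. Under (1)–(3) one writes in such coordinates $f(z,w)=\big(z(1+z^rR(z))+wU(z,w),\ w(1+z^tT(z)+wV(z,w))+z^{s+1}S(z)\big)$ with $R,S,T,U,V$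 holomorphic, $a:=R(0)\ne0$, $b:=T(0)\ne0$, $U=O(|(z,w)|^k)$, $V=O(|(z,w)|^{k-1})$. Director: $\Delta=-b\alpha^t$ with $\alpha$ an $r$-th root of $-1/(ar)$ chosen so that $\mathrm{Re}\,\Delta>0$ whenever possible, if $t<r$; $\Delta=\frac1r(\frac ba-(r-k+1))$ if $t=r$. $[v]$ is transversally attracting if $\mathrm{Re}\,\Delta>0$. *)

theory Defs
  imports "HOL-Analysis.Analysis"
begin

type_synonym c2 = "complex \<times> complex"

definition cmul :: "complex \<Rightarrow> c2 \<Rightarrow> c2" where
  "cmul c x = (c * fst x, c * snd x)"

definition det2 :: "c2 \<Rightarrow> c2 \<Rightarrow> complex" where
  "det2 x y = fst x * snd y - snd x * fst y"

definition holo2_on :: "c2 set \<Rightarrow> (c2 \<Rightarrow> c2) \<Rightarrow> bool" where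
  "holo2_on U f \<longleftrightarrow> (\<forall>z\<in>U. \<exists>L. (f has_derivative L) (at z) \<and>
                         (\<forall>c x. L (cmul c x) = cmul c (L x)))"

definition holo_germ_fixing :: "(c2 \<Rightarrow> c2) \<Rightarrow> c2 \<Rightarrow> bool" where
  "holo_germ_fixing f p \<longleftrightarrow> f p = p \<and> (\<exists>U. open U \<and> p \<in> U \<and> holo2_on U f)"

text \<open>Homogeneous part of degree j of f at p (Taylor expansion of f(p+x)-p):
  the coefficient of t^j in t \<mapsto> f(p + t x) - p.\<close>
definition hpart :: "(c2 \<Rightarrow> c2) \<Rightarrow> c2 \<Rightarrow> nat \<Rightarrow> c2 \<Rightarrow> c2" where
  "hpart f p j x =
     ((deriv ^^ j) (\<lambda>t. fst (f (p + cmul t x) - p)) 0 / fact j,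
      (deriv ^^ j) (\<lambda>t. snd (f (p + cmul t x) - p)) 0 / fact j)"

definition has_order :: "(c2 \<Rightarrow> c2) \<Rightarrow> c2 \<Rightarrow> nat \<Rightarrow> bool" where
  "has_order f p n \<longleftrightarrow> n \<ge> 2 \<and> (\<forall>j. 2 \<le> j \<and> j < n \<longrightarrow> hpart f p j = (\<lambda>x. 0))
                         \<and> hpart f p n \<noteq> (\<lambda>x. 0)"

definition char_dir :: "(c2 \<Rightarrow> c2) \<Rightarrow> c2 \<Rightarrow> bool" where
  "char_dir Q v \<longleftrightarrow> v \<noteq> 0 \<and> (\<exists>c. Q v = cmul c v)"

definition degenerate_char_dir :: "(c2 \<Rightarrow> c2) \<Rightarrow> c2 \<Rightarrow> bool" where
  "degenerate_char_dir Q v \<longleftrightarrow> v \<noteq> 0 \<and> Q v = 0"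

definition nondegenerate_char_dir :: "(c2 \<Rightarrow> c2) \<Rightarrow> c2 \<Rightarrow> bool" where
  "nondegenerate_char_dir Q v \<longleftrightarrow> v \<noteq> 0 \<and> (\<exists>c. c \<noteq> 0 \<and> Q v = cmul c v)"

definition char_dir_degree :: "(c2 \<Rightarrow> c2) \<Rightarrow> c2 \<Rightarrow> nat \<Rightarrow> c2 \<Rightarrow> enat \<Rightarrow> bool" where
  "char_dir_degree f p k v s \<longleftrightarrow>
     (\<forall>j. k + 1 \<le> j \<and> enat j \<le> s \<longrightarrow> char_dir (hpart f p j) v) \<and>
     (\<forall>n. s = enat n \<longrightarrow> \<not> char_dir (hpart f p (Suc n)) v)"

definition nondeg_degree :: "(c2 \<Rightarrow> c2) \<Rightarrow> c2 \<Rightarrow> nat \<Rightarrow> c2 \<Rightarrow> nat \<Rightarrow> bool" where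
  "nondeg_degree f p k v r \<longleftrightarrow>
     (\<forall>j. k + 1 \<le> j \<and> j \<le> r \<longrightarrow> degenerate_char_dir (hpart f p j) v) \<and>
     nondegenerate_char_dir (hpart f p (r + 1)) v"

definition vanish_order :: "(complex \<Rightarrow> complex) \<Rightarrow> enat" where
  "vanish_order g = (if \<exists>n. (deriv ^^ n) g 0 \<noteq> 0
                     then enat (LEAST n. (deriv ^^ n) g 0 \<noteq> 0) else \<infinity>)"

text \<open>Linear coordinates (z,w) with x = z v + w e, so that [v] = [1:0];
  e is some vector completing v to a basis.\<close>
definition compl_vec :: "c2 \<Rightarrow> c2" where
  "compl_vec v = (SOME e. det2 v e \<noteq> 0)"

definition wcoord :: "c2 \<Rightarrow> c2 \<Rightarrow> complex" where
  "wcoord v x = det2 v x / det2 v (compl_vec v)"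

text \<open>l_j: order of vanishing of q_j(1,u) at u = 0, where P_j = (p_j,q_j) in these coordinates.\<close>
definition lj :: "(c2 \<Rightarrow> c2) \<Rightarrow> c2 \<Rightarrow> c2 \<Rightarrow> nat \<Rightarrow> enat" where
  "lj f p v j = vanish_order (\<lambda>u. wcoord v (hpart f p j (v + cmul u (compl_vec v))))"

definition order_one_degree :: "(c2 \<Rightarrow> c2) \<Rightarrow> c2 \<Rightarrow> nat \<Rightarrow> c2 \<Rightarrow> nat \<Rightarrow> bool" where
  "order_one_degree f p k v t \<longleftrightarrow>
     lj f p v (t + 1) = 1 \<and> (\<forall>j. k + 1 \<le> j \<and> j \<le> t \<longrightarrow> 1 < lj f p v j)"

text \<open>Coefficients a = R(0) and b = T(0) of the normal form
  f(z,w) = (z(1+z^r R(z)) + w U, w(1 + z^t T(z) + w V) + z^(s+1) S) in the above coordinates: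
  a is the coefficient of z^(r+1) in the first component, i.e. P_(r+1)(v) = a v;
  b is the coefficient of z^t w in the second component, i.e. d/du q_(t+1)(1,u) at u=0.\<close>
definition coef_a :: "(c2 \<Rightarrow> c2) \<Rightarrow> c2 \<Rightarrow> c2 \<Rightarrow> nat \<Rightarrow> complex" where
  "coef_a f p v r = (SOME a. hpart f p (r + 1) v = cmul a v)"

definition coef_b :: "(c2 \<Rightarrow> c2) \<Rightarrow> c2 \<Rightarrow> c2 \<Rightarrow> nat \<Rightarrow> complex" where
  "coef_b f p v t = deriv (\<lambda>u. wcoord v (hpart f p (t + 1) (v + cmul u (compl_vec v)))) 0"

text \<open>[v] transversally attracting: Re \<Delta> > 0 for the director \<Delta>; for t < r the root \<alpha>
  is chosen so that Re \<Delta> > 0 whenever possible.\<close>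
definition transv_attracting :: "(c2 \<Rightarrow> c2) \<Rightarrow> c2 \<Rightarrow> nat \<Rightarrow> nat \<Rightarrow> nat \<Rightarrow> c2 \<Rightarrow> bool" where
  "transv_attracting f p k r t v \<longleftrightarrow>
     (let a = coef_a f p v r; b = coef_b f p v t in
      if t < r then (\<exists>\<alpha>. \<alpha> ^ r = - 1 / (a * of_nat r) \<and> 0 < Re (- b * \<alpha> ^ t))
      else 0 < Re ((b / a - (of_nat r - of_nat k + 1)) / of_nat r))"

end

theory Submission
  imports Defs "HOL-Complex_Analysis.Complex_Analysis"
begin

text \<open>In coordinates \<open>(z, w)\<close> with \<open>[v] = [1 : 0]\<close>, restrict \<open>f\<close> to the line \<open>w = 0\<close>:
  \<open>f(z, 0) = (A z, B z)\<close>, and let \<open>Cf z\<close> be the \<open>w\<close>-derivative of the second component there.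
  Conditions (1)-(3) say exactly that the Taylor coefficients of \<open>B\<close> vanish up to order \<open>s\<close>,
  that \<open>A z = z + a z\<^sup>r\<^sup>+\<^sup>1 + \<dots>\<close>, and that \<open>Cf z = 1 + b z\<^sup>t + \<dots>\<close>. Writing \<open>g = f\<^sup>-\<^sup>1\<close> and
  \<open>(\<alpha>, \<beta>, \<gamma>)\<close> for the corresponding data of \<open>g\<close>, the identity \<open>g(A z, B z) = (z, 0)\<close> gives
  \<open>\<alpha> \<circ> A = id + O(B)\<close> and \<open>\<beta> \<circ> A = -B \<cdot> \<gamma> \<circ> A + O(B\<^sup>2)\<close>, and its derivative in \<open>w\<close> gives
  \<open>(\<gamma> \<circ> A) \<cdot> Cf = 1 + O(z\<^sup>t\<^sup>+\<^sup>1)\<close>. Since \<open>A z = z + O(z\<^sup>2)\<close>, comparing coefficients shows that \<open>g\<close>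
  satisfies (1)-(3) with the same \<open>k, r, s, t\<close> and with \<open>a, b\<close> replaced by \<open>-a, -b\<close>.
  For \<open>r = t\<close> the director depends only on \<open>b/a\<close>; for \<open>r = 2t\<close> the \<open>t\<close>-th powers of the admissible
  roots for \<open>-a\<close> are \<open>i\<close> times those for \<open>a\<close>, so one of the two directors has positive real part.\<close>

section \<open>Taylor coefficients and the order of vanishing at 0\<close>

definition taylor_coeff :: "(complex \<Rightarrow> complex) \<Rightarrow> nat \<Rightarrow> complex" where
  "taylor_coeff h j = (deriv ^^ j) h 0 / fact j"

lemma taylor_coeff_Cauchy_bound:
  assumes hol: "h holomorphic_on ball 0 R" and cont: "continuous_on (cball 0 R) h" and R: "0 < R"
    and M: "\<And>x. norm x = R \<Longrightarrow> norm (h x) \<le> M"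
  shows "norm (taylor_coeff h n) \<le> M / R^n"
proof -
  have "norm ((deriv ^^ n) h 0) \<le> fact n * M / R^n"
    by (rule Cauchy_inequality[OF hol cont R]) (use M in \<open>auto simp: norm_minus_commute\<close>)
  then show ?thesis unfolding taylor_coeff_def by (simp add: norm_divide field_simps)
qed

lemma taylor_remainder_bound:
  assumes hol: "h holomorphic_on ball 0 R" and cont: "continuous_on (cball 0 R) h" and R: "0 < R"
    and M: "\<And>x. norm x = R \<Longrightarrow> norm (h x) \<le> M"
    and w: "norm w \<le> R/2"
  shows "norm (h w - (\<Sum>j\<le>m. taylor_coeff h j * w^j)) \<le> 2*M*(norm w / R)^(Suc m)"
proof -
  have wb: "w \<in> ball 0 R" using w R by auto
  have s: "(\<lambda>n. taylor_coeff h n * w^n) sums h w"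
    using holomorphic_power_series[OF hol wb] by (simp add: taylor_coeff_def)
  have tail: "(\<lambda>i. taylor_coeff h (i + Suc m) * w^(i + Suc m)) sums (h w - (\<Sum>j\<le>m. taylor_coeff h j * w^j))"
    using sums_split_initial_segment[OF s, of "Suc m"] by (simp add: lessThan_Suc_atMost)
  have "norm (complex_of_real R) = R" using R by simp
  then have M0: "0 \<le> M" using M norm_ge_zero order_trans by blast
  define q where "q = norm w / R"
  have q0: "0 \<le> q" and q1: "q \<le> 1/2" using w R by (auto simp: q_def field_simps)
  have term_bound: "norm (taylor_coeff h (i + Suc m) * w^(i + Suc m)) \<le> M * q^(Suc m) * q^i" for i
  proof -
    have "norm (taylor_coeff h (i + Suc m) * w^(i + Suc m)) \<le> M / R^(i + Suc m) * norm w ^ (i + Suc m)"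
      unfolding norm_mult norm_power
      by (rule mult_right_mono[OF taylor_coeff_Cauchy_bound[OF hol cont R M]]) auto
    also have "\<dots> = M * q^(i + Suc m)" using R by (simp add: q_def power_divide)
    also have "\<dots> = M * q^(Suc m) * q^i" by (simp add: power_add)
    finally show ?thesis .
  qed
  have geom: "(\<lambda>i. M * q^(Suc m) * q^i) sums (M * q^(Suc m) * (1 / (1 - q)))"
    by (rule sums_mult[OF geometric_sums]) (use q0 q1 in auto)
  have "norm (suminf (\<lambda>i. taylor_coeff h (i + Suc m) * w^(i + Suc m))) \<le> suminf (\<lambda>i. M * q^(Suc m) * q^i)"
    by (rule norm_suminf_le[OF term_bound sums_summable[OF geom]])
  then have "norm (h w - (\<Sum>j\<le>m. taylor_coeff h j * w^j)) \<le> M * q^(Suc m) * (1 / (1 - q))"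
    using sums_unique[OF tail] sums_unique[OF geom] by simp
  also have "\<dots> \<le> M * q^(Suc m) * 2"
    by (rule mult_left_mono) (use q0 q1 M0 in \<open>auto simp: field_simps\<close>)
  finally show ?thesis by (simp add: q_def mult_ac)
qed

lemma taylor_coeff_deriv: "taylor_coeff (deriv h) j = of_nat (Suc j) * taylor_coeff h (Suc j)"
proof -
  have 1: "(deriv ^^ j) (deriv h) = (deriv ^^ Suc j) h" by (simp add: funpow_Suc_right del: funpow.simps)
  have 2: "(fact (Suc j) :: complex) = of_nat (Suc j) * fact j"
    by (simp only: fact_Suc of_nat_mult of_nat_fact)
  have 3: "(of_nat (Suc j) :: complex) \<noteq> 0" by (simp only: of_nat_eq_0_iff)
  have 4: "\<And>X b. of_nat (Suc j) * (X / (of_nat (Suc j) * b)) = X / (b::complex)"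
    unfolding times_divide_eq_right by (rule nonzero_mult_divide_mult_cancel_left[OF 3])
  show ?thesis unfolding taylor_coeff_def 1 2 4 ..
qed

lemma taylor_coeff_diff_linear:
  assumes "F holomorphic_on ball 0 r" "0 < r"
  shows "taylor_coeff (\<lambda>t. F t - c * t) j = taylor_coeff F j - (if j = 1 then c else 0)"
proof -
  have "(deriv ^^ j) (\<lambda>t. F t - c * t) 0 = (deriv ^^ j) F 0 - (deriv ^^ j) (\<lambda>t. c * t) 0"
    by (rule higher_deriv_diff) (use assms in \<open>auto intro!: holomorphic_intros\<close>)
  then show ?thesis by (auto simp: taylor_coeff_def)
qed

lemma taylor_coeff_diff_const:
  assumes "F holomorphic_on ball 0 r" "0 < r"
  shows "taylor_coeff (\<lambda>t. F t - c) j = taylor_coeff F j - (if j = 0 then c else 0)"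
proof -
  have "(deriv ^^ j) (\<lambda>t. F t - c) 0 = (deriv ^^ j) F 0 - (deriv ^^ j) (\<lambda>t. c) 0"
    by (rule higher_deriv_diff) (use assms in \<open>auto intro!: holomorphic_intros\<close>)
  then show ?thesis by (auto simp: taylor_coeff_def)
qed

definition bigO0 :: "nat \<Rightarrow> (complex \<Rightarrow> complex) \<Rightarrow> bool" where
  "bigO0 m h \<longleftrightarrow> (\<exists>C \<delta>. 0 \<le> C \<and> 0 < \<delta> \<and> (\<forall>t. norm t < \<delta> \<longrightarrow> norm (h t) \<le> C * norm t ^ m))"

lemma bigO0I:
  assumes "0 < \<delta>" "\<And>t. norm t < \<delta> \<Longrightarrow> norm (h t) \<le> C * norm t ^ m"
  shows "bigO0 m h"
  unfolding bigO0_def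
  by (rule exI[of _ "max C 0"], rule exI[of _ \<delta>])
     (use assms in \<open>auto intro: order_trans[OF _ mult_right_mono[of C "max C 0"]]\<close>)

lemma bigO0E:
  assumes "bigO0 m h"
  obtains C \<delta> where "0 \<le> C" "0 < \<delta>" "\<And>t. norm t < \<delta> \<Longrightarrow> norm (h t) \<le> C * norm t ^ m"
  using assms unfolding bigO0_def by blast

lemma bigO0_le:
  assumes "bigO0 m Y" "0 < d" "\<And>t. norm t < d \<Longrightarrow> norm (X t) \<le> c * norm (Y t)"
  shows "bigO0 m X"
proof -
  obtain C d1 where C: "0 \<le> C" "0 < d1" "\<And>t. norm t < d1 \<Longrightarrow> norm (Y t) \<le> C * norm t ^ m"
    using assms(1) by (meson bigO0E)
  show ?thesis
  proof (rule bigO0I[of "min d d1" _ "max c 0 * C"])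
    fix t :: complex assume t: "norm t < min d d1"
    have "norm (X t) \<le> max c 0 * norm (Y t)"
      using assms(3)[of t] t by (meson max.cobounded1 min_less_iff_conj mult_right_mono norm_ge_zero order_trans)
    also have "\<dots> \<le> max c 0 * (C * norm t ^ m)" using C(3) t by (intro mult_left_mono) auto
    finally show "norm (X t) \<le> max c 0 * C * norm t ^ m" by (simp add: mult_ac)
  qed (use C assms in auto)
qed

lemma bigO0_cong:
  assumes "bigO0 m f" "0 < d" "\<And>t. norm t < d \<Longrightarrow> f t = g t"
  shows "bigO0 m g"
  by (rule bigO0_le[OF assms(1,2), of _ 1]) (use assms(3) in auto)

lemma bigO0_add:
  assumes "bigO0 m f" "bigO0 m g"
  shows "bigO0 m (\<lambda>t. f t + g t)"
proof -
  obtain C1 d1 where 1: "0 \<le> C1" "0 < d1" "\<And>t. norm t < d1 \<Longrightarrow> norm (f t) \<le> C1 * norm t ^ m"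
    using assms(1) by (meson bigO0E)
  obtain C2 d2 where 2: "0 \<le> C2" "0 < d2" "\<And>t. norm t < d2 \<Longrightarrow> norm (g t) \<le> C2 * norm t ^ m"
    using assms(2) by (meson bigO0E)
  show ?thesis
  proof (rule bigO0I[of "min d1 d2" _ "C1 + C2"])
    fix t :: complex assume "norm t < min d1 d2"
    then have "norm (f t) \<le> C1 * norm t ^ m" "norm (g t) \<le> C2 * norm t ^ m" using 1 2 by auto
    then show "norm (f t + g t) \<le> (C1 + C2) * norm t ^ m"
      by (smt (verit, best) distrib_right norm_triangle_ineq)
  qed (use 1 2 in auto)
qed

lemma bigO0_minus: "bigO0 m f \<Longrightarrow> bigO0 m (\<lambda>t. - f t)"
  unfolding bigO0_def by simp

lemma bigO0_diff: "bigO0 m f \<Longrightarrow> bigO0 m g \<Longrightarrow> bigO0 m (\<lambda>t. f t - g t)"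
  using bigO0_add[OF _ bigO0_minus] by simp

lemma bigO0_mono:
  assumes "bigO0 m f" "n \<le> m"
  shows "bigO0 n f"
proof -
  obtain C d where C: "0 \<le> C" "0 < d" "\<And>t. norm t < d \<Longrightarrow> norm (f t) \<le> C * norm t ^ m"
    using assms(1) by (meson bigO0E)
  show ?thesis
  proof (rule bigO0I[of "min d 1" _ C])
    fix t :: complex assume t: "norm t < min d 1"
    have "norm t ^ m \<le> norm t ^ n" using t assms(2) by (intro power_decreasing) auto
    then show "norm (f t) \<le> C * norm t ^ n"
      using C(3)[of t] t C(1) by (meson min_less_iff_conj mult_left_mono order_trans)
  qed (use C in auto)
qed

lemma bigO0_mult:
  assumes "bigO0 m f" "bigO0 n g"
  shows "bigO0 (m + n) (\<lambda>t. f t * g t)"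
proof -
  obtain C1 d1 where 1: "0 \<le> C1" "0 < d1" "\<And>t. norm t < d1 \<Longrightarrow> norm (f t) \<le> C1 * norm t ^ m"
    using assms(1) by (meson bigO0E)
  obtain C2 d2 where 2: "0 \<le> C2" "0 < d2" "\<And>t. norm t < d2 \<Longrightarrow> norm (g t) \<le> C2 * norm t ^ n"
    using assms(2) by (meson bigO0E)
  show ?thesis
  proof (rule bigO0I[of "min d1 d2" _ "C1 * C2"])
    fix t :: complex assume "norm t < min d1 d2"
    then have "norm (f t) \<le> C1 * norm t ^ m" "norm (g t) \<le> C2 * norm t ^ n" using 1 2 by auto
    then have "norm (f t * g t) \<le> (C1 * norm t ^ m) * (C2 * norm t ^ n)"
      unfolding norm_mult by (intro mult_mono mult_nonneg_nonneg) (use 1(1) 2(1) in auto)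
    then show "norm (f t * g t) \<le> (C1 * C2) * norm t ^ (m + n)"
      by (simp add: power_add mult_ac)
  qed (use 1 2 in auto)
qed

lemma bigO0_monomial: "bigO0 m (\<lambda>t. c * t ^ m)"
  by (rule bigO0I[of 1 _ "norm c"]) (auto simp: norm_mult norm_power)

lemma bigO0_0: "bigO0 m (\<lambda>t. 0)"
  using bigO0_monomial[of m 0] by simp

lemma bigO0_cmult: "bigO0 m f \<Longrightarrow> bigO0 m (\<lambda>t. c * f t)"
  using bigO0_mult[OF bigO0_monomial[of 0 c]] by simp

lemma bigO0_cancel_factor:
  assumes "bigO0 m (\<lambda>t. G t * H t)" "0 < d" "\<And>t. norm t < d \<Longrightarrow> c \<le> norm (H t)" "0 < c"
  shows "bigO0 m G"
proof (rule bigO0_le[OF assms(1,2), of _ "1/c"])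
  fix t :: complex assume "norm t < d"
  then have "norm (G t) * c \<le> norm (G t) * norm (H t)" using assms(3) by (intro mult_left_mono) auto
  then show "norm (G t) \<le> 1 / c * norm (G t * H t)" using assms(4) by (simp add: pos_le_divide_eq norm_mult)
qed

lemma monomial_coeff_eq_0_if_bigO0:
  assumes "bigO0 (Suc m) (\<lambda>t. c * t ^ m)"
  shows "c = 0"
proof (rule ccontr)
  assume c: "c \<noteq> 0"
  obtain C d where C: "0 \<le> C" "0 < d" "\<And>t. norm t < d \<Longrightarrow> norm (c * t ^ m) \<le> C * norm t ^ Suc m"
    using assms by (meson bigO0E)
  define e where "e = min (d/2) (norm c / (2 * (C + 1)))"
  have e0: "0 < e" using c C by (auto simp: e_def)
  have "norm (c * (complex_of_real e) ^ m) \<le> C * norm (complex_of_real e) ^ Suc m"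
    using C(3)[of "complex_of_real e"] e0 C(2) by (auto simp: e_def)
  then have "norm c \<le> C * e" using e0 by (simp add: norm_mult norm_power mult_ac)
  also have "C * e \<le> C * (norm c / (2 * (C + 1)))" using C(1) by (intro mult_left_mono) (auto simp: e_def)
  also have "\<dots> < norm c" using c C(1)
    by (simp add: field_simps) (smt (verit) mult_nonneg_nonneg norm_ge_zero zero_less_norm_iff)
  finally show False by simp
qed

lemma near_identity_bound:
  assumes "bigO0 2 (\<lambda>t. A t - t)"
  obtains d where "0 < d" "\<And>t. norm t < d \<Longrightarrow> norm (A t) \<le> 2 * norm t"
proof -
  obtain C d where C: "0 \<le> C" "0 < d" "\<And>t. norm t < d \<Longrightarrow> norm (A t - t) \<le> C * norm t ^ 2"
    using assms by (meson bigO0E)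
  show ?thesis
  proof (rule that[of "min d (1 / (C + 1))"])
    fix t :: complex assume t: "norm t < min d (1 / (C + 1))"
    have "C * norm t \<le> (C + 1) * norm t" by (simp add: mult_right_mono)
    also have "\<dots> \<le> 1" using t C(1) by (simp add: field_simps)
    finally have "C * norm t * norm t \<le> norm t" using mult_right_mono[of "C * norm t" 1 "norm t"] by simp
    moreover have "norm (A t - t) \<le> C * norm t * norm t"
      using C(3)[of t] t by (simp add: power2_eq_square mult_ac)
    moreover have "norm (A t) \<le> norm t + norm (A t - t)"
      by (metis add.commute diff_add_cancel norm_triangle_ineq)
    ultimately show "norm (A t) \<le> 2 * norm t" by simp
  qed (use C in auto)
qed

lemma bigO0_compose:
  assumes "bigO0 m H" "0 < d" "\<And>t. norm t < d \<Longrightarrow> norm (A t) \<le> 2 * norm t"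
  shows "bigO0 m (\<lambda>t. H (A t))"
proof -
  obtain C d1 where C: "0 \<le> C" "0 < d1" "\<And>t. norm t < d1 \<Longrightarrow> norm (H t) \<le> C * norm t ^ m"
    using assms(1) by (meson bigO0E)
  show ?thesis
  proof (rule bigO0I[of "min d (d1/2)" _ "C * 2^m"])
    fix t :: complex assume t: "norm t < min d (d1/2)"
    have At: "norm (A t) \<le> 2 * norm t" using assms(3) t by auto
    then have "norm (H (A t)) \<le> C * norm (A t) ^ m" using C t by auto
    also have "\<dots> \<le> C * (2 * norm t) ^ m" using At C(1) by (intro mult_left_mono power_mono) auto
    finally show "norm (H (A t)) \<le> C * 2 ^ m * norm t ^ m" by (simp add: power_mult_distrib mult_ac)
  qed (use C assms in auto)
qed

lemma bigO0_power_diff: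
  assumes "bigO0 2 (\<lambda>t. A t - t)"
  shows "bigO0 (Suc n) (\<lambda>t. A t ^ n - t ^ n)"
proof (cases n)
  case 0 then show ?thesis using bigO0_0 by simp
next
  case (Suc n')
  obtain C d where C: "0 \<le> C" "0 < d" "\<And>t. norm t < d \<Longrightarrow> norm (A t - t) \<le> C * norm t ^ 2"
    using assms by (meson bigO0E)
  obtain d2 where d2: "0 < d2" "\<And>t. norm t < d2 \<Longrightarrow> norm (A t) \<le> 2 * norm t"
    using near_identity_bound[OF assms] by blast
  show ?thesis
  proof (rule bigO0I[of "min d d2" _ "C * (of_nat n * 2 ^ n)"])
    fix t :: complex assume t: "norm t < min d d2"
    have At: "norm (A t) \<le> 2 * norm t" using d2 t by auto
    have "norm (\<Sum>i<n. t ^ (n - Suc i) * A t ^ i) \<le> (\<Sum>i<n. 2 ^ n * norm t ^ n')"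
    proof (rule order_trans[OF norm_sum sum_mono])
      fix i assume i: "i \<in> {..<n}"
      have "norm (t ^ (n - Suc i) * A t ^ i) \<le> norm t ^ (n - Suc i) * (2 * norm t) ^ i"
        unfolding norm_mult norm_power by (intro mult_left_mono power_mono At) auto
      also have "\<dots> = 2 ^ i * norm t ^ n'"
        using i Suc by (simp add: power_mult_distrib power_add[symmetric] mult_ac)
      also have "\<dots> \<le> 2 ^ n * norm t ^ n'"
        using i by (intro mult_right_mono power_increasing) auto
      finally show "norm (t ^ (n - Suc i) * A t ^ i) \<le> 2 ^ n * norm t ^ n'" .
    qed
    then have sum_bound: "norm (\<Sum>i<n. t ^ (n - Suc i) * A t ^ i) \<le> of_nat n * 2 ^ n * norm t ^ n'"
      by simp
    have "norm (A t ^ n - t ^ n) = norm (A t - t) * norm (\<Sum>i<n. t ^ (n - Suc i) * A t ^ i)"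
      unfolding power_diff_sumr2[where x="A t"] norm_mult ..
    also have "\<dots> \<le> (C * norm t ^ 2) * (of_nat n * 2 ^ n * norm t ^ n')"
      using C(1) C(3)[of t] t by (intro mult_mono sum_bound) auto
    finally show "norm (A t ^ n - t ^ n) \<le> C * (of_nat n * 2 ^ n) * norm t ^ Suc n"
      using Suc by (simp add: power2_eq_square mult_ac)
  qed (use C d2 in auto)
qed

lemma bigO0_taylor_remainder:
  assumes hol: "h holomorphic_on ball 0 R" and R: "0 < R"
  shows "bigO0 (Suc m) (\<lambda>t. h t - (\<Sum>j\<le>m. taylor_coeff h j * t^j))"
proof -
  define r where "r = R / 2"
  have r: "0 < r" "r < R" using R by (auto simp: r_def)
  have sub: "cball 0 r \<subseteq> ball 0 R" using r by auto
  have holr: "h holomorphic_on ball 0 r" using hol by (rule holomorphic_on_subset) (use r in auto)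
  have cont: "continuous_on (cball 0 r) h"
    using holomorphic_on_imp_continuous_on[OF holomorphic_on_subset[OF hol sub]] .
  obtain M where M: "0 < M" "\<And>x. x \<in> cball 0 r \<Longrightarrow> norm (h x) \<le> M"
    using compact_imp_bounded[OF compact_continuous_image[OF cont compact_cball]]
    unfolding bounded_pos by auto
  show ?thesis
  proof (rule bigO0I[of "r/2" _ "2 * M / r ^ Suc m"])
    fix t :: complex assume t: "norm t < r / 2"
    have "norm (h t - (\<Sum>j\<le>m. taylor_coeff h j * t^j)) \<le> 2*M*(norm t / r)^(Suc m)"
      by (rule taylor_remainder_bound[OF holr cont r(1)]) (use M t in auto)
    then show "norm (h t - (\<Sum>j\<le>m. taylor_coeff h j * t ^ j)) \<le> 2 * M / r ^ Suc m * norm t ^ Suc m"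
      by (simp add: power_divide)
  qed (use r in auto)
qed

lemma bigO0_sub_leading_term:
  assumes hol: "h holomorphic_on ball 0 R" and R: "0 < R"
    and z: "\<And>i. i < m \<Longrightarrow> taylor_coeff h i = 0"
  shows "bigO0 (Suc m) (\<lambda>t. h t - taylor_coeff h m * t^m)"
proof -
  have "(\<Sum>j\<le>m. taylor_coeff h j * t ^ j) = taylor_coeff h m * t ^ m" for t
    using z by (simp add: lessThan_Suc_atMost[symmetric])
  then show ?thesis using bigO0_taylor_remainder[OF hol R, of m] by simp
qed

lemma bigO0_sub_two_terms:
  assumes hol: "h holomorphic_on ball 0 R" and R: "0 < R" and ij: "i < j"
    and c: "\<And>n. n \<le> j \<Longrightarrow> taylor_coeff h n = (if n = i then x else if n = j then y else 0)"
  shows "bigO0 (Suc j) (\<lambda>t. h t - (x * t ^ i + y * t ^ j))"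
proof -
  have "(\<Sum>n\<le>j. taylor_coeff h n * t ^ n) =
        (\<Sum>n\<le>j. (if n = i then x * t ^ n else 0) + (if n = j then y * t ^ n else 0))" for t
    by (rule sum.cong) (use c ij in auto)
  then show ?thesis using bigO0_taylor_remainder[OF hol R, of j] ij by (simp add: sum.distrib)
qed

lemma bigO0_of_taylor_coeff_zero:
  assumes hol: "h holomorphic_on ball 0 R" and R: "0 < R"
    and z: "\<And>j. j < n \<Longrightarrow> taylor_coeff h j = 0"
  shows "bigO0 n h"
proof -
  have "bigO0 n (\<lambda>t. (h t - taylor_coeff h n * t^n) + taylor_coeff h n * t^n)"
    by (rule bigO0_add[OF bigO0_mono[OF bigO0_sub_leading_term[OF hol R z]] bigO0_monomial]) auto
  then show ?thesis by simp
qed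

lemma bigO0_of_holomorphic:
  assumes "h holomorphic_on ball 0 R" "0 < R"
  shows "bigO0 0 h"
  by (rule bigO0_of_taylor_coeff_zero[OF assms]) simp

lemma taylor_coeffs_of_bigO0_compose:
  assumes hol: "h holomorphic_on ball 0 R" and R: "0 < R" and A: "bigO0 2 (\<lambda>t. A t - t)"
    and b: "bigO0 (Suc m) (\<lambda>t. h (A t) - c * t^m)"
  shows "(\<forall>j<m. taylor_coeff h j = 0) \<and> taylor_coeff h m = c"
proof -
  obtain d where d: "0 < d" "\<And>t. norm t < d \<Longrightarrow> norm (A t) \<le> 2 * norm t"
    using near_identity_bound[OF A] by blast
  have leading: "bigO0 (Suc j) (\<lambda>t. h (A t) - taylor_coeff h j * t^j)"
    if z: "\<And>i. i < j \<Longrightarrow> taylor_coeff h i = 0" for j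
  proof -
    have "bigO0 (Suc j) (\<lambda>t. h (A t) - taylor_coeff h j * A t ^ j)"
      using bigO0_compose[OF bigO0_sub_leading_term[OF hol R z] d] .
    from bigO0_add[OF this bigO0_cmult[where c="taylor_coeff h j", OF bigO0_power_diff[OF A]]] show ?thesis
      by (simp add: algebra_simps)
  qed
  have z: "j < m \<Longrightarrow> taylor_coeff h j = 0" for j
  proof (induction j rule: less_induct)
    case (less j)
    have "bigO0 (Suc j) (\<lambda>t. (h (A t) - c * t^m) + c * t^m)"
      by (rule bigO0_add[OF bigO0_mono[OF b] bigO0_mono[OF bigO0_monomial]]) (use less in auto)
    from bigO0_diff[OF this leading] less
    have "bigO0 (Suc j) (\<lambda>t. taylor_coeff h j * t^j)" by simp
    then show ?case by (rule monomial_coeff_eq_0_if_bigO0)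
  qed
  have "bigO0 (Suc m) (\<lambda>t. (h (A t) - c * t^m) - (h (A t) - taylor_coeff h m * t^m))"
    by (rule bigO0_diff[OF b leading]) (use z in auto)
  then have "bigO0 (Suc m) (\<lambda>t. (taylor_coeff h m - c) * t^m)" by (simp add: algebra_simps)
  then show ?thesis using z monomial_coeff_eq_0_if_bigO0 by fastforce
qed

lemma taylor_coeff_zero_of_bigO0:
  assumes hol: "h holomorphic_on ball 0 R" and R: "0 < R" and O: "bigO0 (Suc m) h" and j: "j \<le> m"
  shows "taylor_coeff h j = 0"
  using taylor_coeffs_of_bigO0_compose[OF hol R, of "\<lambda>t. t" m 0] O bigO0_0 j by (auto simp: le_less)

lemma deriv_Cauchy_bound:
  assumes hol: "h holomorphic_on ball 0 R" and cont: "continuous_on (cball 0 R) h"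
    and \<rho>: "0 < \<rho>" "norm x + \<rho> \<le> R" and M: "\<And>y. norm y \<le> R \<Longrightarrow> norm (h y) \<le> M"
  shows "norm (deriv h x) \<le> M / \<rho>"
proof -
  have "norm ((deriv ^^ 1) h x) \<le> fact 1 * M / \<rho>^1"
  proof (rule Cauchy_inequality)
    show "h holomorphic_on ball x \<rho>"
      by (rule holomorphic_on_subset[OF hol]) (use \<rho> in \<open>simp add: ball_subset_ball_iff dist_norm\<close>)
    show "continuous_on (cball x \<rho>) h"
      by (rule continuous_on_subset[OF cont]) (use \<rho> in \<open>simp add: cball_subset_cball_iff dist_norm\<close>)
    fix y assume "norm (x - y) = \<rho>"
    then show "norm (h y) \<le> M" using \<rho> norm_triangle_sub[of y x] by (intro M) (simp add: norm_minus_commute)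
  qed (use \<rho> in auto)
  then show ?thesis by simp
qed

lemma taylor_coeff_has_contour_integral:
  assumes hol: "h holomorphic_on ball 0 R" and \<rho>: "0 < \<rho>" "\<rho> < R"
  shows "((\<lambda>t. h t / t^(Suc j)) has_contour_integral (2*pi*\<i> * taylor_coeff h j)) (circlepath 0 \<rho>)"
proof -
  have "((\<lambda>t. h t / (t - 0)^(Suc j)) has_contour_integral
          ((2*pi*\<i>) / (fact j) * (deriv ^^ j) h 0)) (circlepath 0 \<rho>)"
  proof (rule Cauchy_has_contour_integral_higher_derivative_circlepath)
    show "continuous_on (cball 0 \<rho>) h"
      by (rule holomorphic_on_imp_continuous_on, rule holomorphic_on_subset[OF hol]) (use \<rho> in auto)
    show "h holomorphic_on ball 0 \<rho>"
      by (rule holomorphic_on_subset[OF hol]) (use \<rho> in auto)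
  qed (use \<rho> in auto)
  then show ?thesis by (simp add: taylor_coeff_def)
qed

lemma has_field_derivative_at_0_of_quotient_bound:
  fixes F :: "complex \<Rightarrow> complex"
  assumes C: "0 \<le> C" and bound: "\<And>u. u \<noteq> 0 \<Longrightarrow> norm u \<le> 1 \<Longrightarrow> norm ((F u - F 0) / u - D) \<le> C * norm u"
  shows "(F has_field_derivative D) (at 0)"
  unfolding DERIV_def LIM_eq
proof (intro allI impI)
  fix r :: real assume r: "0 < r"
  show "\<exists>s>0. \<forall>x. x \<noteq> 0 \<and> norm (x - 0) < s \<longrightarrow> norm ((F (0 + x) - F 0) / x - D) < r"
  proof (rule exI[of _ "min 1 (r / (C + 1))"], intro conjI allI impI)
    show "0 < min 1 (r / (C + 1))" using r C by auto
    fix x :: complex assume x: "x \<noteq> 0 \<and> norm (x - 0) < min 1 (r / (C + 1))"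
    have "norm ((F x - F 0) / x - D) \<le> (C + 1) * norm x"
      using bound[of x] x by (smt (verit) mult_right_mono norm_ge_zero min_less_iff_conj diff_zero)
    also have "\<dots> < (C + 1) * (r / (C + 1))" using x C by (intro mult_strict_left_mono) auto
    also have "\<dots> = r" using C by simp
    finally show "norm ((F (0 + x) - F 0) / x - D) < r" by simp
  qed
qed

section \<open>Holomorphic functions of two variables on a bidisc\<close>

text \<open>Besides separate holomorphy, the definition asks for holomorphy along the cones
  \<open>t \<mapsto> (t, t u)\<close>, \<open>|u| \<le> 1\<close>: these are the restrictions to lines through the origin
  that enter the order-of-vanishing conditions.\<close>

definition bidisc_holomorphic :: "(complex \<Rightarrow> complex \<Rightarrow> complex) \<Rightarrow> real \<Rightarrow> bool" where
  "bidisc_holomorphic \<Psi> R \<longleftrightarrow> 0 < R \<and> continuous_on (cball 0 R \<times> cball 0 R) (\<lambda>(z,w). \<Psi> z w) \<and>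
     (\<forall>w\<in>cball 0 R. (\<lambda>z. \<Psi> z w) holomorphic_on ball 0 R) \<and>
     (\<forall>z\<in>cball 0 R. (\<lambda>w. \<Psi> z w) holomorphic_on ball 0 R) \<and>
     (\<forall>u. norm u \<le> 1 \<longrightarrow> (\<lambda>t. \<Psi> t (t*u)) holomorphic_on ball 0 R)"

definition dw0 :: "(complex \<Rightarrow> complex \<Rightarrow> complex) \<Rightarrow> complex \<Rightarrow> complex" where
  "dw0 \<Psi> z = deriv (\<lambda>w. \<Psi> z w) 0"

context
  fixes \<Psi> :: "complex \<Rightarrow> complex \<Rightarrow> complex" and R :: real
  assumes bih: "bidisc_holomorphic \<Psi> R"
begin

lemma bidisc_radius_pos: "0 < R"
  using bih by (simp add: bidisc_holomorphic_def)

lemma bidisc_holomorphic_in_z: "norm w \<le> R \<Longrightarrow> (\<lambda>z. \<Psi> z w) holomorphic_on ball 0 R"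
  using bih by (simp add: bidisc_holomorphic_def)

lemma bidisc_holomorphic_in_w: "norm z \<le> R \<Longrightarrow> (\<lambda>w. \<Psi> z w) holomorphic_on ball 0 R"
  using bih by (simp add: bidisc_holomorphic_def)

lemma bidisc_holomorphic_on_cone: "norm u \<le> 1 \<Longrightarrow> (\<lambda>t. \<Psi> t (t*u)) holomorphic_on ball 0 R"
  using bih by (simp add: bidisc_holomorphic_def)

lemma bidisc_continuous_on_slices:
  shows "norm z \<le> R \<Longrightarrow> continuous_on (cball 0 R) (\<lambda>w. \<Psi> z w)"
    and "norm w \<le> R \<Longrightarrow> continuous_on (cball 0 R) (\<lambda>z. \<Psi> z w)"
proof -
  have c: "continuous_on (cball 0 R \<times> cball 0 R) (\<lambda>(z,w). \<Psi> z w)"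
    using bih by (simp add: bidisc_holomorphic_def)
  show "continuous_on (cball 0 R) (\<lambda>w. \<Psi> z w)" if "norm z \<le> R"
  proof -
    have "continuous_on (cball 0 R) ((\<lambda>(z,w). \<Psi> z w) \<circ> (\<lambda>w. (z,w)))"
      by (rule continuous_on_compose[OF continuous_on_Pair[OF continuous_on_const continuous_on_id]
            continuous_on_subset[OF c]]) (use that in auto)
    then show ?thesis by (simp add: o_def)
  qed
  show "continuous_on (cball 0 R) (\<lambda>z. \<Psi> z w)" if "norm w \<le> R"
  proof -
    have "continuous_on (cball 0 R) ((\<lambda>(z,w). \<Psi> z w) \<circ> (\<lambda>z. (z,w)))"
      by (rule continuous_on_compose[OF continuous_on_Pair[OF continuous_on_id continuous_on_const]
            continuous_on_subset[OF c]]) (use that in auto)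
    then show ?thesis by (simp add: o_def)
  qed
qed

lemma bidisc_bounded:
  obtains M where "0 < M" "\<And>z w. norm z \<le> R \<Longrightarrow> norm w \<le> R \<Longrightarrow> norm (\<Psi> z w) \<le> M"
proof -
  have c: "continuous_on (cball 0 R \<times> cball 0 R) (\<lambda>(z,w). \<Psi> z w)"
    using bih by (simp add: bidisc_holomorphic_def)
  have "compact ((\<lambda>(z,w). \<Psi> z w) ` (cball 0 R \<times> cball 0 R))"
    by (rule compact_continuous_image[OF c compact_Times[OF compact_cball compact_cball]])
  then obtain M where "0 < M" "\<forall>x\<in>(\<lambda>(z,w). \<Psi> z w) ` (cball 0 R \<times> cball 0 R). norm x \<le> M"
    using compact_imp_bounded bounded_pos by metis
  then show ?thesis using that by auto
qed

lemma bidisc_expansion_in_w: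
  obtains K L where "0 \<le> K" "0 \<le> L"
    "\<And>z w. norm z \<le> R \<Longrightarrow> norm w \<le> R/2 \<Longrightarrow> norm (\<Psi> z w - \<Psi> z 0) \<le> L * norm w"
    "\<And>z w. norm z \<le> R \<Longrightarrow> norm w \<le> R/2 \<Longrightarrow> norm (\<Psi> z w - \<Psi> z 0 - w * dw0 \<Psi> z) \<le> K * norm w ^ 2"
proof -
  obtain M where M: "0 < M" "\<And>z w. norm z \<le> R \<Longrightarrow> norm w \<le> R \<Longrightarrow> norm (\<Psi> z w) \<le> M"
    using bidisc_bounded by blast
  have R: "0 < R" by (rule bidisc_radius_pos)
  show ?thesis
  proof (rule that[of "2*M/R^2" "2*M/R"])
    fix z w :: complex assume z: "norm z \<le> R" and w: "norm w \<le> R/2"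
    have rem: "norm (\<Psi> z w - (\<Sum>j\<le>m. taylor_coeff (\<lambda>w. \<Psi> z w) j * w^j)) \<le> 2*M*(norm w / R)^(Suc m)" for m
      by (rule taylor_remainder_bound[OF bidisc_holomorphic_in_w[OF z]
            bidisc_continuous_on_slices(1)[OF z] R _ w]) (use M z in auto)
    show "norm (\<Psi> z w - \<Psi> z 0) \<le> 2*M/R * norm w"
      using rem[of 0] by (simp add: taylor_coeff_def)
    show "norm (\<Psi> z w - \<Psi> z 0 - w * dw0 \<Psi> z) \<le> 2*M/R^2 * norm w ^ 2"
      using rem[of 1] by (simp add: taylor_coeff_def dw0_def power_divide algebra_simps power2_eq_square)
  qed (use M R in auto)
qed

text \<open>\<open>dw0 \<Psi>\<close> is the locally uniform limit of the difference quotients \<open>(\<Psi> z h - \<Psi> z 0) / h\<close>.\<close>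

lemma dw0_holomorphic:
  shows "dw0 \<Psi> holomorphic_on ball 0 R" "continuous_on (cball 0 R) (dw0 \<Psi>)"
proof -
  obtain K L where KL: "0 \<le> K" "0 \<le> L"
    "\<And>z w. norm z \<le> R \<Longrightarrow> norm w \<le> R/2 \<Longrightarrow> norm (\<Psi> z w - \<Psi> z 0) \<le> L * norm w"
    "\<And>z w. norm z \<le> R \<Longrightarrow> norm w \<le> R/2 \<Longrightarrow> norm (\<Psi> z w - \<Psi> z 0 - w * dw0 \<Psi> z) \<le> K * norm w ^ 2"
    by (rule bidisc_expansion_in_w) blast
  have R: "0 < R" by (rule bidisc_radius_pos)
  define q where "q = (\<lambda>h z. (\<Psi> z h - \<Psi> z 0) / h)"
  have ev: "\<forall>\<^sub>F h in at 0. continuous_on (cball 0 R) (q h) \<and> q h holomorphic_on ball 0 R"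
    unfolding eventually_at
  proof (rule exI[of _ R], rule conjI[OF R], intro ballI impI)
    fix h :: complex assume h: "h \<noteq> 0 \<and> dist h 0 < R"
    then have hR: "norm h \<le> R" by simp
    have c0: "norm (0::complex) \<le> R" using R by simp
    have h0: "h \<noteq> 0" using h by simp
    show "continuous_on (cball 0 R) (q h) \<and> q h holomorphic_on ball 0 R"
      unfolding q_def
      by (intro conjI continuous_intros holomorphic_intros bidisc_continuous_on_slices(2)[OF hR]
            bidisc_continuous_on_slices(2)[OF c0] bidisc_holomorphic_in_z[OF hR]
            bidisc_holomorphic_in_z[OF c0]) (simp_all add: h0)
  qed
  have "uniform_limit (cball 0 R) q (dw0 \<Psi>) (at 0)"
  proof (rule uniform_limitI)
    fix \<epsilon> :: real assume \<epsilon>: "0 < \<epsilon>"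
    show "\<forall>\<^sub>F h in at 0. \<forall>z\<in>cball 0 R. dist (q h z) (dw0 \<Psi> z) < \<epsilon>"
      unfolding eventually_at
    proof (rule exI[of _ "min (R/2) (\<epsilon>/(K+1))"], intro conjI allI impI ballI)
      show "0 < min (R/2) (\<epsilon>/(K+1))" using R \<epsilon> KL by auto
      fix h z :: complex assume h: "h \<noteq> 0 \<and> dist h 0 < min (R/2) (\<epsilon>/(K+1))" and z: "z \<in> cball 0 R"
      have "q h z - dw0 \<Psi> z = (\<Psi> z h - \<Psi> z 0 - h * dw0 \<Psi> z) / h"
        using h by (simp add: q_def field_simps)
      then have "dist (q h z) (dw0 \<Psi> z) = norm (\<Psi> z h - \<Psi> z 0 - h * dw0 \<Psi> z) / norm h"
        by (simp add: dist_norm norm_divide)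
      also have "\<dots> \<le> K * norm h ^ 2 / norm h"
        using KL(4)[of z h] z h by (intro divide_right_mono) auto
      also have "\<dots> = K * norm h" using h by (simp add: power2_eq_square)
      also have "\<dots> \<le> (K + 1) * norm h" by (simp add: mult_right_mono)
      also have "\<dots> < (K + 1) * (\<epsilon> / (K + 1))" using h KL by (intro mult_strict_left_mono) auto
      also have "\<dots> = \<epsilon>" using KL by simp
      finally show "dist (q h z) (dw0 \<Psi> z) < \<epsilon>" .
    qed
  qed
  with holomorphic_uniform_limit[OF ev]
  show "dw0 \<Psi> holomorphic_on ball 0 R" "continuous_on (cball 0 R) (dw0 \<Psi>)" by auto
qed

lemma bidisc_dw_lipschitz:
  obtains K where "0 \<le> K"
    "\<And>z w. norm z \<le> R \<Longrightarrow> norm w \<le> R/4 \<Longrightarrow> norm (deriv (\<lambda>w. \<Psi> z w) w - dw0 \<Psi> z) \<le> K * norm w"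
proof -
  obtain M where M: "0 < M" "\<And>z w. norm z \<le> R \<Longrightarrow> norm w \<le> R \<Longrightarrow> norm (\<Psi> z w) \<le> M"
    using bidisc_bounded by blast
  have R: "0 < R" by (rule bidisc_radius_pos)
  show ?thesis
  proof (rule that[of "2*(2*M/R)/(R/2)"])
    fix z w :: complex assume z: "norm z \<le> R" and w: "norm w \<le> R/4"
    define \<phi> where "\<phi> = (\<lambda>w. \<Psi> z w)"
    have hol: "\<phi> holomorphic_on ball 0 R" unfolding \<phi>_def by (rule bidisc_holomorphic_in_w[OF z])
    have hold: "deriv \<phi> holomorphic_on ball 0 (R/2)"
      by (rule holomorphic_on_subset[OF holomorphic_deriv[OF hol open_ball]]) (use R in auto)
    have contd: "continuous_on (cball 0 (R/2)) (deriv \<phi>)"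
      by (rule holomorphic_on_imp_continuous_on, rule holomorphic_on_subset[OF holomorphic_deriv[OF hol open_ball]])
         (use R in auto)
    have "norm (deriv \<phi> x) \<le> M / (R/2)" if "norm x = R/2" for x
      by (rule deriv_Cauchy_bound[OF hol bidisc_continuous_on_slices(1)[OF z, folded \<phi>_def]])
         (use that R M z in \<open>auto simp: \<phi>_def\<close>)
    then have "norm (deriv \<phi> w - (\<Sum>j\<le>0. taylor_coeff (deriv \<phi>) j * w^j)) \<le> 2*(2*M/R)*(norm w / (R/2))^(Suc 0)"
      by (intro taylor_remainder_bound[OF hold contd]) (use R w in auto)
    then show "norm (deriv (\<lambda>w. \<Psi> z w) w - dw0 \<Psi> z) \<le> 2*(2*M/R)/(R/2) * norm w"
      by (simp add: taylor_coeff_def dw0_def \<phi>_def)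
  qed (use M R in auto)
qed

lemma bidisc_dz_lipschitz:
  obtains K where "0 \<le> K"
    "\<And>z w. norm z \<le> R/2 \<Longrightarrow> norm w \<le> R/2 \<Longrightarrow>
       norm (deriv (\<lambda>z. \<Psi> z w) z - deriv (\<lambda>z. \<Psi> z 0) z) \<le> K * norm w"
proof -
  obtain K L where KL: "0 \<le> K" "0 \<le> L"
    "\<And>z w. norm z \<le> R \<Longrightarrow> norm w \<le> R/2 \<Longrightarrow> norm (\<Psi> z w - \<Psi> z 0) \<le> L * norm w"
    "\<And>z w. norm z \<le> R \<Longrightarrow> norm w \<le> R/2 \<Longrightarrow> norm (\<Psi> z w - \<Psi> z 0 - w * dw0 \<Psi> z) \<le> K * norm w ^ 2"
    by (rule bidisc_expansion_in_w) blast
  have R: "0 < R" by (rule bidisc_radius_pos)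
  show ?thesis
  proof (rule that[of "L/(R/2)"])
    fix z w :: complex assume z: "norm z \<le> R/2" and w: "norm w \<le> R/2"
    have wR: "norm w \<le> R" and zR: "norm (0::complex) \<le> R" using w R by auto
    define \<kappa> where "\<kappa> = (\<lambda>\<zeta>. \<Psi> \<zeta> w - \<Psi> \<zeta> 0)"
    have hol: "\<kappa> holomorphic_on ball 0 R" unfolding \<kappa>_def
      by (intro holomorphic_intros bidisc_holomorphic_in_z wR zR)
    have cont: "continuous_on (cball 0 R) \<kappa>" unfolding \<kappa>_def
      by (intro continuous_intros bidisc_continuous_on_slices(2) wR zR)
    have "norm (deriv \<kappa> z) \<le> (L * norm w) / (R/2)"
      by (rule deriv_Cauchy_bound[OF hol cont]) (use R z w KL(3) in \<open>auto simp: \<kappa>_def\<close>)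
    moreover have "deriv \<kappa> z = deriv (\<lambda>z. \<Psi> z w) z - deriv (\<lambda>z. \<Psi> z 0) z"
    proof -
      have zb: "z \<in> ball 0 R" using z R by auto
      show ?thesis unfolding \<kappa>_def
        by (rule deriv_diff; rule holomorphic_on_imp_differentiable_at[OF _ open_ball zb])
           (auto intro: bidisc_holomorphic_in_z[OF wR] bidisc_holomorphic_in_z[OF zR])
    qed
    ultimately show "norm (deriv (\<lambda>z. \<Psi> z w) z - deriv (\<lambda>z. \<Psi> z 0) z) \<le> L/(R/2) * norm w"
      by (simp add: mult_ac)
  qed (use KL R in auto)
qed

text \<open>Cauchy's formula turns the first-order expansion in \<open>w\<close> into a first-order expansion of
  the Taylor coefficients along the cone \<open>t \<mapsto> (t, t u)\<close>.\<close>

lemma cone_quotient_contour_integral: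
  assumes j: "1 \<le> j" and u0: "u \<noteq> 0" and u1: "norm u \<le> 1"
  shows "((\<lambda>t. (\<Psi> t (t*u) - \<Psi> t 0 - t*u * dw0 \<Psi> t) / (u * t^(Suc j))) has_contour_integral
      2*pi*\<i> * ((taylor_coeff (\<lambda>t. \<Psi> t (t*u)) j - taylor_coeff (\<lambda>t. \<Psi> t (t*0)) j) / u
                 - taylor_coeff (dw0 \<Psi>) (j - 1))) (circlepath 0 (R/2))"
proof -
  have \<rho>: "0 < R/2" "R/2 < R" using bidisc_radius_pos by auto
  have I\<Psi>: "((\<lambda>t. \<Psi> t (t*u) / t^(Suc j)) has_contour_integral 2*pi*\<i> * taylor_coeff (\<lambda>t. \<Psi> t (t*u)) j)
      (circlepath 0 (R/2))" if "norm u \<le> 1" for u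
    by (rule taylor_coeff_has_contour_integral[OF bidisc_holomorphic_on_cone[OF that] \<rho>])
  have I\<gamma>: "((\<lambda>t. dw0 \<Psi> t / t^j) has_contour_integral 2*pi*\<i> * taylor_coeff (dw0 \<Psi>) (j - 1))
      (circlepath 0 (R/2))"
    using taylor_coeff_has_contour_integral[OF dw0_holomorphic(1) \<rho>, of "j - 1"] j by simp
  have "((\<lambda>t. (\<Psi> t (t*u) / t^(Suc j) - \<Psi> t (t*0) / t^(Suc j)) / u - dw0 \<Psi> t / t^j)
      has_contour_integral (2*pi*\<i> * taylor_coeff (\<lambda>t. \<Psi> t (t*u)) j
        - 2*pi*\<i> * taylor_coeff (\<lambda>t. \<Psi> t (t*0)) j) / u - 2*pi*\<i> * taylor_coeff (dw0 \<Psi>) (j - 1))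
      (circlepath 0 (R/2))"
    by (intro has_contour_integral_diff has_contour_integral_div I\<Psi> u1 I\<gamma>) simp
  then show ?thesis
  proof (rule has_contour_integral_eq[THEN back_subst[where P="\<lambda>c. (_ has_contour_integral c) _"]])
    fix t assume "t \<in> path_image (circlepath 0 (R/2))"
    then have "t \<noteq> 0" using \<rho> by auto
    then show "(\<Psi> t (t*u) / t^(Suc j) - \<Psi> t (t*0) / t^(Suc j)) / u - dw0 \<Psi> t / t^j
        = (\<Psi> t (t*u) - \<Psi> t 0 - t*u * dw0 \<Psi> t) / (u * t^(Suc j))"
      using u0 by (simp add: field_simps)
  qed (simp add: field_simps)
qed

lemma cone_taylor_coeff_quotient_bound:
  assumes j: "1 \<le> j"
  obtains C where "0 \<le> C" "\<And>u. u \<noteq> 0 \<Longrightarrow> norm u \<le> 1 \<Longrightarrow>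
    norm ((taylor_coeff (\<lambda>t. \<Psi> t (t*u)) j - taylor_coeff (\<lambda>t. \<Psi> t (t*0)) j) / u
          - taylor_coeff (dw0 \<Psi>) (j - 1)) \<le> C * norm u"
proof -
  obtain K L where KL: "0 \<le> K" "0 \<le> L"
    "\<And>z w. norm z \<le> R \<Longrightarrow> norm w \<le> R/2 \<Longrightarrow> norm (\<Psi> z w - \<Psi> z 0) \<le> L * norm w"
    "\<And>z w. norm z \<le> R \<Longrightarrow> norm w \<le> R/2 \<Longrightarrow> norm (\<Psi> z w - \<Psi> z 0 - w * dw0 \<Psi> z) \<le> K * norm w ^ 2"
    by (rule bidisc_expansion_in_w) blast
  define \<rho> where "\<rho> = R/2"
  have \<rho>: "0 < \<rho>" using bidisc_radius_pos by (simp add: \<rho>_def)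
  show ?thesis
  proof (rule that[of "K * \<rho>^3 / \<rho>^(Suc j)"])
    fix u :: complex assume u0: "u \<noteq> 0" and u1: "norm u \<le> 1"
    have integrand_bound: "norm ((\<Psi> t (t*u) - \<Psi> t 0 - t*u * dw0 \<Psi> t) / (u * t^(Suc j)))
        \<le> K * \<rho>^2 * norm u / \<rho>^(Suc j)" if t: "norm (t - 0) = \<rho>" for t
    proof -
      have tt: "norm t = \<rho>" using t by simp
      have "norm (t*u) \<le> R/2" using tt u1 \<rho> mult_left_le[of "norm u" "norm t"] by (simp add: norm_mult \<rho>_def)
      then have "norm (\<Psi> t (t*u) - \<Psi> t 0 - t*u * dw0 \<Psi> t) \<le> K * norm (t*u)^2"
        using KL(4) tt \<rho> by (simp add: \<rho>_def)
      also have "\<dots> = K * \<rho>^2 * norm u^2" using tt by (simp add: norm_mult power_mult_distrib)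
      finally have "norm ((\<Psi> t (t*u) - \<Psi> t 0 - t*u * dw0 \<Psi> t) / (u * t^(Suc j)))
          \<le> K * \<rho>^2 * norm u^2 / (norm u * \<rho>^(Suc j))"
        using \<rho> by (simp add: norm_divide norm_mult norm_power tt divide_right_mono)
      also have "\<dots> = K * \<rho>^2 * norm u / \<rho>^(Suc j)" using u0 by (simp add: power2_eq_square)
      finally show ?thesis .
    qed
    define X where "X = (taylor_coeff (\<lambda>t. \<Psi> t (t*u)) j - taylor_coeff (\<lambda>t. \<Psi> t (t*0)) j) / u
      - taylor_coeff (dw0 \<Psi>) (j - 1)"
    have "2 * pi * norm X = norm (2*pi*\<i> * X)" by (simp add: norm_mult)
    also have "\<dots> \<le> K * \<rho>^2 * norm u / \<rho>^(Suc j) * (2 * pi * \<rho>)"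
      unfolding X_def
      by (rule has_contour_integral_bound_circlepath[OF cone_quotient_contour_integral[OF j u0 u1, folded \<rho>_def]
            _ \<rho>]) (use KL \<rho> integrand_bound in auto)
    also have "\<dots> = (2 * pi) * (K * \<rho>^3 / \<rho>^(Suc j) * norm u)"
      by (simp add: power3_eq_cube power2_eq_square field_simps)
    finally show "norm X \<le> K * \<rho>^3 / \<rho>^(Suc j) * norm u"
      by (rule mult_left_le_imp_le) simp
  qed (use KL \<rho> in simp)
qed

lemma cone_taylor_coeff_has_derivative:
  assumes "1 \<le> j"
  shows "((\<lambda>u. taylor_coeff (\<lambda>t. \<Psi> t (t*u)) j) has_field_derivative taylor_coeff (dw0 \<Psi>) (j - 1)) (at 0)"
proof -
  obtain C where "0 \<le> C" "\<And>u. u \<noteq> 0 \<Longrightarrow> norm u \<le> 1 \<Longrightarrow>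
    norm ((taylor_coeff (\<lambda>t. \<Psi> t (t*u)) j - taylor_coeff (\<lambda>t. \<Psi> t (t*0)) j) / u
          - taylor_coeff (dw0 \<Psi>) (j - 1)) \<le> C * norm u"
    using cone_taylor_coeff_quotient_bound[OF assms] by blast
  then show ?thesis by (rule has_field_derivative_at_0_of_quotient_bound)
qed

end

section \<open>Holomorphic maps of \<open>\<complex>\<^sup>2\<close> along complex lines\<close>

lemma cmul_simps [simp]:
  "fst (cmul c x) = c * fst x" "snd (cmul c x) = c * snd x"
  "cmul 0 x = 0" "cmul 1 x = x" "cmul c 0 = 0"
  by (auto simp: cmul_def zero_prod_def)

lemma cmul_cmul [simp]: "cmul a (cmul b x) = cmul (a*b) x"
  by (simp add: cmul_def mult_ac)

lemma cmul_add_right: "cmul c (x + y) = cmul c x + cmul c y"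
  by (simp add: cmul_def algebra_simps)

lemma norm_cmul: "norm (cmul c x) = norm c * norm x"
proof -
  have "norm (cmul c x) = sqrt ((norm c)^2 * ((norm (fst x))^2 + (norm (snd x))^2))"
    by (simp add: cmul_def norm_Pair norm_mult power_mult_distrib algebra_simps)
  also have "\<dots> = norm c * norm x"
    by (simp add: real_sqrt_mult norm_Pair[of "fst x" "snd x", simplified])
  finally show ?thesis .
qed

definition lin_form :: "complex \<Rightarrow> complex \<Rightarrow> c2 \<Rightarrow> complex" where
  "lin_form c1 c2 y = c1 * fst y + c2 * snd y"

lemma lin_form_add: "lin_form c1 c2 (x + y) = lin_form c1 c2 x + lin_form c1 c2 y"
  and lin_form_diff: "lin_form c1 c2 (x - y) = lin_form c1 c2 x - lin_form c1 c2 y"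
  and lin_form_cmul: "lin_form c1 c2 (cmul c x) = c * lin_form c1 c2 x"
  and lin_form_zero: "lin_form c1 c2 0 = 0"
  by (auto simp: lin_form_def algebra_simps)

lemma norm_lin_form_le: "norm (lin_form c1 c2 y) \<le> (norm c1 + norm c2) * norm y"
proof -
  have "norm (lin_form c1 c2 y) \<le> norm c1 * norm (fst y) + norm c2 * norm (snd y)"
    unfolding lin_form_def by (metis norm_mult norm_triangle_ineq)
  also have "\<dots> \<le> norm c1 * norm y + norm c2 * norm y"
    using norm_fst_le[of "fst y" "snd y"] norm_snd_le[of "snd y" "fst y"]
    by (intro add_mono mult_left_mono) auto
  finally show ?thesis by (simp add: distrib_right)
qed

definition holo2_deriv :: "(c2 \<Rightarrow> c2) \<Rightarrow> c2 \<Rightarrow> c2 \<Rightarrow> c2" where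
  "holo2_deriv h y = (SOME L. (h has_derivative L) (at y) \<and> (\<forall>c x. L (cmul c x) = cmul c (L x)))"

lemma holo2_deriv:
  assumes "holo2_on U h" "y \<in> U"
  shows "(h has_derivative holo2_deriv h y) (at y)"
    and "\<And>c x. holo2_deriv h y (cmul c x) = cmul c (holo2_deriv h y x)"
proof -
  have "\<exists>L. (h has_derivative L) (at y) \<and> (\<forall>c x. L (cmul c x) = cmul c (L x))"
    using assms by (simp add: holo2_on_def)
  then have "(h has_derivative holo2_deriv h y) (at y) \<and>
      (\<forall>c x. holo2_deriv h y (cmul c x) = cmul c (holo2_deriv h y x))"
    unfolding holo2_deriv_def by (rule someI_ex)
  then show "(h has_derivative holo2_deriv h y) (at y)"
    "\<And>c x. holo2_deriv h y (cmul c x) = cmul c (holo2_deriv h y x)" by auto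
qed

lemma holo2_on_imp_continuous_on: "holo2_on U h \<Longrightarrow> continuous_on U h"
  by (meson holo2_deriv(1) continuous_at_imp_continuous_on has_derivative_continuous)

lemma holo2_on_subset: "holo2_on U h \<Longrightarrow> V \<subseteq> U \<Longrightarrow> holo2_on V h"
  by (auto simp: holo2_on_def)

lemma lin_form_line_has_field_derivative:
  assumes hd: "(h has_derivative L) (at (a + cmul t0 x))" and lin: "\<And>c y. L (cmul c y) = cmul c (L y)"
  shows "((\<lambda>t. lin_form c1 c2 (h (a + cmul t x) - q)) has_field_derivative lin_form c1 c2 (L x)) (at t0)"
proof -
  have "((\<lambda>t. a + cmul t x) has_derivative (\<lambda>s. cmul s x)) (at t0)"
    unfolding cmul_def by (auto intro!: derivative_eq_intros)
  from has_derivative_compose[OF this hd]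
  have H: "((\<lambda>t. h (a + cmul t x)) has_derivative (\<lambda>s. cmul s (L x))) (at t0)"
    by (simp add: lin)
  have "((\<lambda>t. c1 * fst (h (a + cmul t x) - q) + c2 * snd (h (a + cmul t x) - q)) has_derivative
          (\<lambda>s. c1 * fst (cmul s (L x) - 0) + c2 * snd (cmul s (L x) - 0))) (at t0)"
    by (intro has_derivative_add has_derivative_mult_right has_derivative_fst has_derivative_snd
          has_derivative_diff H has_derivative_const)
  moreover have "(\<lambda>s. c1 * fst (cmul s (L x) - 0) + c2 * snd (cmul s (L x) - 0)) =
      (\<lambda>s. lin_form c1 c2 (L x) * s)"
    by (auto simp: lin_form_def algebra_simps)
  ultimately show ?thesis unfolding has_field_derivative_def lin_form_def by simp
qed

lemma lin_form_line_holomorphic: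
  assumes h: "holo2_on U h" and S: "\<And>t. t \<in> S \<Longrightarrow> a + cmul t x \<in> U"
  shows "(\<lambda>t. lin_form c1 c2 (h (a + cmul t x) - q)) holomorphic_on S"
  unfolding holomorphic_on_def
proof
  fix t assume t: "t \<in> S"
  show "(\<lambda>t. lin_form c1 c2 (h (a + cmul t x) - q)) field_differentiable at t within S"
    using lin_form_line_has_field_derivative[OF holo2_deriv[OF h S[OF t]]]
    by (meson field_differentiable_at_within field_differentiable_def)
qed

lemma line_in_open:
  assumes "open U" "p \<in> U"
  obtains r where "0 < r" "\<And>t. t \<in> ball 0 r \<Longrightarrow> p + cmul t x \<in> U"
proof -
  obtain e where e: "0 < e" "ball p e \<subseteq> U" using assms open_contains_ball by blast
  have nx: "0 < norm x + 1" by (simp add: add_nonneg_pos)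
  show ?thesis
  proof (rule that[of "e / (norm x + 1)"])
    fix t :: complex assume t: "t \<in> ball 0 (e / (norm x + 1))"
    have "norm (cmul t x) \<le> norm t * (norm x + 1)" by (simp add: norm_cmul mult_left_mono)
    also have "\<dots> < e" using t pos_less_divide_eq[OF nx, of "norm t" e] by simp
    finally show "p + cmul t x \<in> U" using e by (auto simp: dist_norm)
  qed (use e nx in auto)
qed

lemma lin_form_hpart:
  assumes h: "holo2_on U h" and U: "open U" "p \<in> U"
  shows "lin_form c1 c2 (hpart h p j x) = taylor_coeff (\<lambda>t. lin_form c1 c2 (h (p + cmul t x) - p)) j"
proof -
  obtain r where r: "0 < r" "\<And>t. t \<in> ball 0 r \<Longrightarrow> p + cmul t x \<in> U"
    using line_in_open[OF U] by blast
  have "(\<lambda>t. lin_form 1 0 (h (p + cmul t x) - p)) holomorphic_on ball 0 r"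
    "(\<lambda>t. lin_form 0 1 (h (p + cmul t x) - p)) holomorphic_on ball 0 r"
    by (rule lin_form_line_holomorphic[OF h], use r in auto)+
  then have hf1: "(\<lambda>t. fst (h (p + cmul t x) - p)) holomorphic_on ball 0 r"
    and hf2: "(\<lambda>t. snd (h (p + cmul t x) - p)) holomorphic_on ball 0 r"
    by (simp_all add: lin_form_def)
  have "(deriv ^^ j) (\<lambda>t. c1 * fst (h (p + cmul t x) - p) + c2 * snd (h (p + cmul t x) - p)) 0
      = (deriv ^^ j) (\<lambda>t. c1 * fst (h (p + cmul t x) - p)) 0 + (deriv ^^ j) (\<lambda>t. c2 * snd (h (p + cmul t x) - p)) 0"
    by (rule higher_deriv_add[OF holomorphic_on_mult[OF holomorphic_on_const hf1]
          holomorphic_on_mult[OF holomorphic_on_const hf2] open_ball]) (use r in auto)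
  also have "\<dots> = c1 * (deriv ^^ j) (\<lambda>t. fst (h (p + cmul t x) - p)) 0 + c2 * (deriv ^^ j) (\<lambda>t. snd (h (p + cmul t x) - p)) 0"
    using higher_deriv_cmult[OF hf1 _ open_ball] higher_deriv_cmult[OF hf2 _ open_ball] r by simp
  finally show ?thesis unfolding lin_form_def taylor_coeff_def hpart_def by (simp add: add_divide_distrib)
qed

lemma hpart_0: "h p = p \<Longrightarrow> hpart h p 0 x = 0"
  by (simp add: hpart_def prod_eq_iff)

lemma hpart_1_tangent:
  assumes "(h has_derivative (\<lambda>x. x)) (at p)"
  shows "hpart h p 1 x = x"
proof -
  have "((\<lambda>t. lin_form c1 c2 (h (p + cmul t x) - p)) has_field_derivative lin_form c1 c2 x) (at 0)" for c1 c2
    using lin_form_line_has_field_derivative[of h "\<lambda>x. x" p 0 x c1 c2 p] assms by simp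
  from DERIV_imp_deriv[OF this]
  have "deriv (\<lambda>t. lin_form c1 c2 (h (p + cmul t x) - p)) 0 = lin_form c1 c2 x" for c1 c2 .
  from this[of 1 0] this[of 0 1] show ?thesis
    by (simp add: hpart_def lin_form_def prod_eq_iff)
qed

section \<open>Maps tangent to the identity and their inverses\<close>

lemma taylor_coeff_line_remainder_eq_0:
  assumes h: "holo2_on U h" and U: "open U" "p \<in> U" and hp: "h p = p"
    and hd: "(h has_derivative (\<lambda>x. x)) (at p)"
    and z: "\<And>j. 2 \<le> j \<Longrightarrow> j \<le> m \<Longrightarrow> hpart h p j = (\<lambda>x. 0)"
    and r: "0 < r" "\<And>\<tau>. \<tau> \<in> ball 0 r \<Longrightarrow> p + cmul \<tau> \<xi> \<in> U" and j: "j \<le> m"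
  shows "taylor_coeff (\<lambda>\<tau>. lin_form ca cb (h (p + cmul \<tau> \<xi>) - p) - lin_form ca cb \<xi> * \<tau>) j = 0"
proof -
  have hol: "(\<lambda>\<tau>. lin_form ca cb (h (p + cmul \<tau> \<xi>) - p)) holomorphic_on ball 0 r"
    by (rule lin_form_line_holomorphic[OF h r(2)])
  have "taylor_coeff (\<lambda>\<tau>. lin_form ca cb (h (p + cmul \<tau> \<xi>) - p) - lin_form ca cb \<xi> * \<tau>) j
      = lin_form ca cb (hpart h p j \<xi>) - (if j = 1 then lin_form ca cb \<xi> else 0)"
    using taylor_coeff_diff_linear[OF hol r(1)] lin_form_hpart[OF h U] by simp
  also have "\<dots> = 0"
    using hpart_0[of h p, OF hp] hpart_1_tangent[OF hd] z[of j] j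
    by (cases "j = 0"; cases "j = 1") (auto simp: lin_form_zero)
  finally show ?thesis .
qed

lemma lin_form_remainder_on_line:
  assumes h: "holo2_on U h" and U: "open U" "p \<in> U" and hp: "h p = p"
    and hd: "(h has_derivative (\<lambda>x. x)) (at p)"
    and z: "\<And>j. 2 \<le> j \<Longrightarrow> j \<le> m \<Longrightarrow> hpart h p j = (\<lambda>x. 0)"
    and \<delta>: "0 < \<delta>" "cball p (2*\<delta>) \<subseteq> U"
    and M: "\<And>y. y \<in> cball p (2*\<delta>) \<Longrightarrow> norm (lin_form ca cb (h y - p)) \<le> M"
    and \<xi>: "norm \<xi> = \<delta>" and \<tau>: "norm \<tau> \<le> 1"
  shows "norm (lin_form ca cb (h (p + cmul \<tau> \<xi>) - p - cmul \<tau> \<xi>))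
    \<le> 2 * (M + 2 * (norm ca + norm cb) * \<delta>) * norm \<tau> ^ Suc m"
proof -
  define \<phi> where "\<phi> = (\<lambda>\<tau>. lin_form ca cb (h (p + cmul \<tau> \<xi>) - p) - lin_form ca cb \<xi> * \<tau>)"
  have inU: "p + cmul \<tau> \<xi> \<in> cball p (2*\<delta>)" if "norm \<tau> \<le> 2" for \<tau>
    using that \<delta> by (simp add: dist_norm norm_cmul \<xi> mult_right_mono)
  have hol: "\<phi> holomorphic_on ball 0 2" unfolding \<phi>_def
    by (intro holomorphic_intros lin_form_line_holomorphic[OF h]) (use inU \<delta> in auto)
  have "continuous_on (cball 0 2) (\<lambda>\<tau>. h (p + cmul \<tau> \<xi>))"
    by (rule continuous_on_compose2[OF holo2_on_imp_continuous_on[OF h], of _ "\<lambda>\<tau>. p + cmul \<tau> \<xi>"])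
       (use inU \<delta> in \<open>auto simp: cmul_def intro!: continuous_intros\<close>)
  then have cont: "continuous_on (cball 0 2) \<phi>" unfolding \<phi>_def lin_form_def by (intro continuous_intros)
  have tz: "taylor_coeff \<phi> j = 0" if "j \<le> m" for j
    unfolding \<phi>_def
    by (rule taylor_coeff_line_remainder_eq_0[OF h U hp hd z, where r=2]) (use inU \<delta> that in auto)
  have bound: "norm (\<phi> y) \<le> M + 2 * (norm ca + norm cb) * \<delta>" if "norm y = 2" for y
  proof -
    have "norm (\<phi> y) \<le> norm (lin_form ca cb (h (p + cmul y \<xi>) - p)) + norm (lin_form ca cb \<xi> * y)"
      unfolding \<phi>_def by (rule norm_triangle_ineq4)
    also have "\<dots> \<le> M + (norm ca + norm cb) * \<delta> * 2"
      using M[OF inU[of y]] that norm_lin_form_le[of ca cb \<xi>] \<xi> by (intro add_mono) (auto simp: norm_mult)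
    finally show ?thesis by (simp add: mult_ac)
  qed
  have M'0: "0 \<le> M + 2 * (norm ca + norm cb) * \<delta>"
    using order_trans[OF norm_ge_zero bound[of 2]] by simp
  have "norm (\<phi> \<tau> - (\<Sum>j\<le>m. taylor_coeff \<phi> j * \<tau>^j))
      \<le> 2 * (M + 2 * (norm ca + norm cb) * \<delta>) * (norm \<tau> / 2)^(Suc m)"
    by (rule taylor_remainder_bound[OF hol cont]) (use bound \<tau> in auto)
  then have "norm (\<phi> \<tau>) \<le> 2 * (M + 2 * (norm ca + norm cb) * \<delta>) * (norm \<tau> / 2)^(Suc m)"
    using tz by simp
  also have "\<dots> \<le> 2 * (M + 2 * (norm ca + norm cb) * \<delta>) * norm \<tau> ^ Suc m"
    using M'0 by (intro mult_left_mono power_mono) auto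
  finally show ?thesis by (simp add: \<phi>_def lin_form_diff lin_form_cmul mult.commute)
qed

text \<open>Rescaling \<open>x\<close> to a point \<open>\<xi>\<close> of a fixed sphere reduces the estimate to a uniform Taylor
  remainder bound on the lines \<open>\<tau> \<mapsto> p + \<tau> \<xi>\<close>.\<close>

lemma lin_form_tangent_remainder_bound:
  assumes h: "holo2_on U h" and U: "open U" "p \<in> U" and hp: "h p = p"
    and hd: "(h has_derivative (\<lambda>x. x)) (at p)"
    and z: "\<And>j. 2 \<le> j \<Longrightarrow> j \<le> m \<Longrightarrow> hpart h p j = (\<lambda>x. 0)"
  obtains C \<delta> where "0 < \<delta>"
    "\<And>x. norm x < \<delta> \<Longrightarrow> norm (lin_form ca cb (h (p + x) - p - x)) \<le> C * norm x ^ Suc m"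
proof -
  obtain \<epsilon> where \<epsilon>: "0 < \<epsilon>" "ball p \<epsilon> \<subseteq> U" using U open_contains_ball by blast
  define \<delta> where "\<delta> = \<epsilon> / 4"
  have \<delta>: "0 < \<delta>" "cball p (2*\<delta>) \<subseteq> U" using \<epsilon> by (auto simp: \<delta>_def)
  have cont: "continuous_on (cball p (2*\<delta>)) h"
    by (rule continuous_on_subset[OF holo2_on_imp_continuous_on[OF h] \<delta>(2)])
  have "compact ((\<lambda>y. lin_form ca cb (h y - p)) ` cball p (2*\<delta>))"
    by (rule compact_continuous_image) (auto simp: lin_form_def intro!: continuous_intros cont)
  then obtain M where "\<forall>z\<in>(\<lambda>y. lin_form ca cb (h y - p)) ` cball p (2*\<delta>). norm z \<le> M"
    using compact_imp_bounded bounded_pos by blast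
  then have M: "\<And>y. y \<in> cball p (2*\<delta>) \<Longrightarrow> norm (lin_form ca cb (h y - p)) \<le> M" by auto
  define C where "C = 2 * (M + 2 * (norm ca + norm cb) * \<delta>)"
  show ?thesis
  proof (rule that[OF \<delta>(1), of "C / \<delta> ^ Suc m"])
    fix x :: c2 assume x: "norm x < \<delta>"
    define \<xi> where "\<xi> = cmul (of_real (\<delta> / norm x)) x"
    define \<tau> where "\<tau> = complex_of_real (norm x / \<delta>)"
    show "norm (lin_form ca cb (h (p + x) - p - x)) \<le> C / \<delta> ^ Suc m * norm x ^ Suc m"
    proof (cases "x = 0")
      case True then show ?thesis using hp by (simp add: lin_form_def)
    next
      case False
      then have "norm \<xi> = \<delta>" using \<delta> by (simp add: \<xi>_def norm_cmul norm_divide)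
      moreover have "cmul \<tau> \<xi> = x" using False \<delta> by (simp add: \<tau>_def \<xi>_def cmul_def prod_eq_iff)
      moreover have "norm \<tau> = norm x / \<delta>" using \<delta> by (simp add: \<tau>_def norm_divide)
      ultimately show ?thesis
        using lin_form_remainder_on_line[OF h U hp hd z \<delta> M, where \<xi>=\<xi> and \<tau>=\<tau>] x \<delta>
        by (simp add: C_def power_divide)
    qed
  qed
qed

lemma tangent_remainder_bound:
  assumes h: "holo2_on U h" and U: "open U" "p \<in> U" and hp: "h p = p"
    and hd: "(h has_derivative (\<lambda>x. x)) (at p)"
    and z: "\<And>j. 2 \<le> j \<Longrightarrow> j \<le> m \<Longrightarrow> hpart h p j = (\<lambda>x. 0)"
  obtains C \<delta> where "0 \<le> C" "0 < \<delta>" "\<And>x. norm x < \<delta> \<Longrightarrow> norm (h (p + x) - p - x) \<le> C * norm x ^ Suc m"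
proof -
  obtain C1 d1 where 1: "0 < d1"
    "\<And>x. norm x < d1 \<Longrightarrow> norm (lin_form 1 0 (h (p + x) - p - x)) \<le> C1 * norm x ^ Suc m"
    using lin_form_tangent_remainder_bound[OF assms] by blast
  obtain C2 d2 where 2: "0 < d2"
    "\<And>x. norm x < d2 \<Longrightarrow> norm (lin_form 0 1 (h (p + x) - p - x)) \<le> C2 * norm x ^ Suc m"
    using lin_form_tangent_remainder_bound[OF assms] by blast
  show ?thesis
  proof (rule that[of "max (C1 + C2) 0" "min d1 d2"])
    fix x :: c2 assume x: "norm x < min d1 d2"
    have "norm (h (p + x) - p - x) \<le> norm (lin_form 1 0 (h (p + x) - p - x)) + norm (lin_form 0 1 (h (p + x) - p - x))"
      using norm_Pair_le[of "fst (h (p + x) - p - x)" "snd (h (p + x) - p - x)"]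
      unfolding prod.collapse by (simp add: lin_form_def)
    also have "\<dots> \<le> (C1 + C2) * norm x ^ Suc m" using 1 2 x by (simp add: add_mono distrib_right)
    also have "\<dots> \<le> max (C1 + C2) 0 * norm x ^ Suc m" by (intro mult_right_mono) auto
    finally show "norm (h (p + x) - p - x) \<le> max (C1 + C2) 0 * norm x ^ Suc m" .
  qed (use 1 2 in auto)
qed

lemma hpart_eq_0_of_remainder_bound:
  assumes h: "holo2_on U h" and U: "open U" "p \<in> U"
    and d: "0 < d" and bound: "\<And>y. norm y < d \<Longrightarrow> norm (h (p + y) - p - y) \<le> C * norm y ^ Suc m"
    and j: "2 \<le> j" "j \<le> m"
  shows "hpart h p j = (\<lambda>x. 0)"
proof
  fix x0
  have "lin_form ca cb (hpart h p j x0) = 0" for ca cb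
  proof -
    obtain r where r: "0 < r" "\<And>t. t \<in> ball 0 r \<Longrightarrow> p + cmul t x0 \<in> U"
      using line_in_open[OF U] by blast
    define \<psi> where "\<psi> = (\<lambda>\<tau>. lin_form ca cb (h (p + cmul \<tau> x0) - p) - lin_form ca cb x0 * \<tau>)"
    have hol0: "(\<lambda>\<tau>. lin_form ca cb (h (p + cmul \<tau> x0) - p)) holomorphic_on ball 0 r"
      by (rule lin_form_line_holomorphic[OF h r(2)])
    have "bigO0 (Suc m) \<psi>"
    proof (rule bigO0I[of "d / (norm x0 + 1)" _ "(norm ca + norm cb) * C * norm x0 ^ Suc m"])
      have n1: "0 < norm x0 + 1" by (simp add: add_nonneg_pos)
      then show "0 < d / (norm x0 + 1)" using d by simp
      fix \<tau> :: complex assume \<tau>: "norm \<tau> < d / (norm x0 + 1)"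
      have "norm \<tau> * norm x0 \<le> norm \<tau> * (norm x0 + 1)" by (simp add: mult_left_mono)
      also have "\<dots> < d" using \<tau> pos_less_divide_eq[OF n1] by simp
      finally have yd: "norm (cmul \<tau> x0) < d" by (simp add: norm_cmul)
      have "norm (\<psi> \<tau>) = norm (lin_form ca cb (h (p + cmul \<tau> x0) - p - cmul \<tau> x0))"
        by (simp add: \<psi>_def lin_form_diff lin_form_cmul mult.commute)
      also have "\<dots> \<le> (norm ca + norm cb) * norm (h (p + cmul \<tau> x0) - p - cmul \<tau> x0)"
        by (rule norm_lin_form_le)
      also have "\<dots> \<le> (norm ca + norm cb) * (C * norm (cmul \<tau> x0) ^ Suc m)"
        by (intro mult_left_mono bound yd) auto
      also have "\<dots> = (norm ca + norm cb) * C * norm x0 ^ Suc m * norm \<tau> ^ Suc m"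
        by (simp add: norm_cmul power_mult_distrib mult_ac)
      finally show "norm (\<psi> \<tau>) \<le> (norm ca + norm cb) * C * norm x0 ^ Suc m * norm \<tau> ^ Suc m" .
    qed
    then have "taylor_coeff \<psi> j = 0"
      by (rule taylor_coeff_zero_of_bigO0[rotated 2]) (use hol0 r j in \<open>auto simp: \<psi>_def intro!: holomorphic_intros\<close>)
    moreover have "taylor_coeff \<psi> j = lin_form ca cb (hpart h p j x0)"
      unfolding \<psi>_def
      using taylor_coeff_diff_linear[OF hol0 r(1), of "lin_form ca cb x0" j] lin_form_hpart[OF h U] j
      by (simp add: mult.commute)
    ultimately show ?thesis by simp
  qed
  from this[of 1 0] this[of 0 1] show "hpart h p j x0 = 0"
    by (simp add: lin_form_def prod_eq_iff)
qed

lemma inverse_tangent_to_identity: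
  assumes germ: "holo_germ_fixing g p" and fd: "(f has_derivative (\<lambda>x. x)) (at p)"
    and inv: "eventually (\<lambda>x. f (g x) = x) (nhds p)"
  shows "(g has_derivative (\<lambda>x. x)) (at p)"
proof -
  obtain U where hU: "holo2_on U g" "p \<in> U" and gp: "g p = p"
    using germ unfolding holo_germ_fixing_def by blast
  have gd: "(g has_derivative holo2_deriv g p) (at p)" by (rule holo2_deriv(1)[OF hU])
  have "((\<lambda>x. f (g x)) has_derivative holo2_deriv g p) (at p)"
    using has_derivative_compose[OF gd] fd gp by simp
  moreover obtain S where S: "open S" "p \<in> S" "\<And>x. x \<in> S \<Longrightarrow> f (g x) = x"
    using inv unfolding eventually_nhds by blast
  then have "((\<lambda>x. f (g x)) has_derivative (\<lambda>x. x)) (at p)"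
    by (intro has_derivative_transform_within_open[OF has_derivative_ident S(1) S(2)]) auto
  ultimately have "holo2_deriv g p = (\<lambda>x. x)" by (rule has_derivative_unique)
  then show ?thesis using gd by simp
qed

text \<open>With \<open>x = g(p + y) - p\<close> one has \<open>|x| \<le> 2|y|\<close> and \<open>g(p + y) - p - y = -(f(p + x) - p - x)\<close>.\<close>

lemma inverse_remainder_bound:
  fixes f g :: "c2 \<Rightarrow> c2"
  assumes gp: "g p = p" and gd: "(g has_derivative (\<lambda>x. x)) (at p)"
    and inv: "eventually (\<lambda>x. f (g x) = x) (nhds p)"
    and C: "0 \<le> C" and \<delta>: "0 < \<delta>"
    and bound: "\<And>x. norm x < \<delta> \<Longrightarrow> norm (f (p + x) - p - x) \<le> C * norm x ^ Suc m"
  obtains d where "0 < d" "\<And>y. norm y < d \<Longrightarrow> norm (g (p + y) - p - y) \<le> C * 2 ^ Suc m * norm y ^ Suc m"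
proof -
  have "\<forall>e>0. \<exists>d>0. \<forall>y. norm (y - p) < d \<longrightarrow> norm (g y - g p - (y - p)) \<le> e * norm (y - p)"
    using gd unfolding has_derivative_at_alt by blast
  then obtain d1 where d1: "0 < d1" "\<And>y. norm (y - p) < d1 \<Longrightarrow> norm (g y - g p - (y - p)) \<le> 1 * norm (y - p)"
    by (meson zero_less_one)
  obtain d2 where d2: "0 < d2" "\<And>y. dist y p < d2 \<Longrightarrow> f (g y) = y"
    using inv unfolding eventually_nhds_metric by blast
  show ?thesis
  proof (rule that[of "min d1 (min d2 (\<delta>/2))"])
    fix y :: c2 assume y: "norm y < min d1 (min d2 (\<delta>/2))"
    define x where "x = g (p + y) - p"
    have "norm (x - y) \<le> norm y" using d1(2)[of "p + y"] y gp by (simp add: x_def)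
    then have nx: "norm x \<le> 2 * norm y" using norm_triangle_ineq2[of x y] by simp
    then have xd: "norm x < \<delta>" using y by simp
    have fx: "f (p + x) = p + y" using d2(2)[of "p + y"] y by (simp add: x_def dist_norm)
    have "norm (g (p + y) - p - y) = norm (f (p + x) - p - x)"
      using fx by (simp add: x_def norm_minus_commute)
    also have "\<dots> \<le> C * norm x ^ Suc m" by (rule bound[OF xd])
    also have "\<dots> \<le> C * (2 * norm y) ^ Suc m" using nx C by (intro mult_left_mono power_mono) auto
    finally show "norm (g (p + y) - p - y) \<le> C * 2 ^ Suc m * norm y ^ Suc m"
      by (simp add: power_mult_distrib mult_ac)
  qed (use d1 d2 \<delta> in auto)
qed

lemma inverse_hpart_eq_0:
  assumes hf: "holo2_on Uf f" "open Uf" "p \<in> Uf" and fp: "f p = p"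
    and fd: "(f has_derivative (\<lambda>x. x)) (at p)"
    and hg: "holo2_on Ug g" "open Ug" "p \<in> Ug" and gp: "g p = p"
    and gd: "(g has_derivative (\<lambda>x. x)) (at p)"
    and inv: "eventually (\<lambda>x. f (g x) = x) (nhds p)"
    and z: "\<And>j. 2 \<le> j \<Longrightarrow> j \<le> m \<Longrightarrow> hpart f p j = (\<lambda>x. 0)"
    and j: "2 \<le> j" "j \<le> m"
  shows "hpart g p j = (\<lambda>x. 0)"
proof -
  obtain C \<delta> where "0 \<le> C" "0 < \<delta>" "\<And>x. norm x < \<delta> \<Longrightarrow> norm (f (p + x) - p - x) \<le> C * norm x ^ Suc m"
    using tangent_remainder_bound[OF hf fp fd z] by blast
  then obtain d where "0 < d" "\<And>y. norm y < d \<Longrightarrow> norm (g (p + y) - p - y) \<le> C * 2 ^ Suc m * norm y ^ Suc m"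
    using inverse_remainder_bound[OF gp gd inv] by blast
  then show ?thesis by (rule hpart_eq_0_of_remainder_bound[OF hg _ _ j])
qed

lemma has_order_inverse:
  assumes germf: "holo_germ_fixing f p" and fd: "(f has_derivative (\<lambda>x. x)) (at p)"
    and germg: "holo_germ_fixing g p" and gd: "(g has_derivative (\<lambda>x. x)) (at p)"
    and inv1: "eventually (\<lambda>x. g (f x) = x) (nhds p)"
    and inv2: "eventually (\<lambda>x. f (g x) = x) (nhds p)"
    and order: "has_order f p n"
  shows "has_order g p n"
proof -
  obtain Uf where hf: "open Uf" "p \<in> Uf" "holo2_on Uf f" and fp: "f p = p"
    using germf unfolding holo_germ_fixing_def by blast
  obtain Ug where hg: "open Ug" "p \<in> Ug" "holo2_on Ug g" and gp: "g p = p"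
    using germg unfolding holo_germ_fixing_def by blast
  have n: "2 \<le> n" and zf: "\<And>j. 2 \<le> j \<Longrightarrow> j \<le> n - 1 \<Longrightarrow> hpart f p j = (\<lambda>x. 0)"
    and nz: "hpart f p n \<noteq> (\<lambda>x. 0)" using order unfolding has_order_def by auto
  have zg: "\<And>j. 2 \<le> j \<Longrightarrow> j \<le> n - 1 \<Longrightarrow> hpart g p j = (\<lambda>x. 0)"
    using inverse_hpart_eq_0[OF hf(3,1,2) fp fd hg(3,1,2) gp gd inv2 zf] by blast
  have "hpart g p n \<noteq> (\<lambda>x. 0)"
  proof
    assume "hpart g p n = (\<lambda>x. 0)"
    then have "\<And>j. 2 \<le> j \<Longrightarrow> j \<le> n \<Longrightarrow> hpart g p j = (\<lambda>x. 0)"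
      using zg by (case_tac "j = n") auto
    then have "hpart f p n = (\<lambda>x. 0)"
      using inverse_hpart_eq_0[OF hg(3,1,2) gp gd hf(3,1,2) fp fd inv1, of n n] n by blast
    then show False using nz by simp
  qed
  then show ?thesis using n zg unfolding has_order_def by auto
qed

lemma bidisc_holomorphic_frame:
  assumes h: "holo2_on U h" and U: "ball p \<epsilon> \<subseteq> U" and R: "0 < R" and Rb: "R * (norm v + norm e) < \<epsilon>"
  shows "bidisc_holomorphic (\<lambda>z w. lin_form c1 c2 (h (p + cmul z v + cmul w e) - p)) R"
proof -
  have inb: "p + cmul z v + cmul w e \<in> ball p \<epsilon>" if "norm z \<le> R" "norm w \<le> R" for z w
  proof -
    have "norm (cmul z v + cmul w e) \<le> norm z * norm v + norm w * norm e"
      using norm_triangle_ineq[of "cmul z v" "cmul w e"] by (simp add: norm_cmul)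
    also have "\<dots> \<le> R * norm v + R * norm e" using that by (intro add_mono mult_right_mono) auto
    also have "\<dots> < \<epsilon>" using Rb by (simp add: distrib_left)
    moreover have "- cmul z v - cmul w e = - (cmul z v + cmul w e)" by simp
    ultimately show ?thesis by (simp add: dist_norm add.assoc del: minus_add_distrib)
  qed
  have cont: "continuous_on (cball 0 R \<times> cball 0 R) (\<lambda>(z,w). lin_form c1 c2 (h (p + cmul z v + cmul w e) - p))"
  proof -
    have "continuous_on (cball 0 R \<times> cball 0 R) (\<lambda>zw. h (p + cmul (fst zw) v + cmul (snd zw) e))"
      by (rule continuous_on_compose2[OF holo2_on_imp_continuous_on[OF h],
            of _ "\<lambda>zw. p + cmul (fst zw) v + cmul (snd zw) e"])
         (use inb U in \<open>auto simp: cmul_def intro!: continuous_intros\<close>)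
    then show ?thesis unfolding lin_form_def case_prod_beta by (intro continuous_intros)
  qed
  show ?thesis unfolding bidisc_holomorphic_def
  proof (intro conjI R cont ballI allI impI)
    fix w :: complex assume w: "w \<in> cball 0 R"
    have "(\<lambda>z. lin_form c1 c2 (h ((p + cmul w e) + cmul z v) - p)) holomorphic_on ball 0 R"
      by (rule lin_form_line_holomorphic[OF h]) (use inb[of _ w] w U in \<open>auto simp: add_ac\<close>)
    then show "(\<lambda>z. lin_form c1 c2 (h (p + cmul z v + cmul w e) - p)) holomorphic_on ball 0 R"
      by (simp add: add_ac)
  next
    fix z :: complex assume z: "z \<in> cball 0 R"
    show "(\<lambda>w. lin_form c1 c2 (h (p + cmul z v + cmul w e) - p)) holomorphic_on ball 0 R"
      by (rule lin_form_line_holomorphic[OF h]) (use inb[of z] z U in auto)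
  next
    fix u :: complex assume u: "norm u \<le> 1"
    have "(\<lambda>t. lin_form c1 c2 (h (p + cmul t (v + cmul u e)) - p)) holomorphic_on ball 0 R"
    proof (rule lin_form_line_holomorphic[OF h])
      fix t :: complex assume t: "t \<in> ball 0 R"
      have "norm (t * u) \<le> R" using t u mult_left_le[of "norm u" "norm t"] by (simp add: norm_mult)
      then show "p + cmul t (v + cmul u e) \<in> U"
        using inb[of t "t*u"] t U by (auto simp: cmul_add_right add.assoc)
    qed
    then show "(\<lambda>t. lin_form c1 c2 (h (p + cmul t v + cmul (t * u) e) - p)) holomorphic_on ball 0 R"
      by (simp add: cmul_add_right add.assoc)
  qed
qed

lemma vanish_order_eq_0: "\<phi> 0 \<noteq> 0 \<Longrightarrow> vanish_order \<phi> = 0"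
  unfolding vanish_order_def
  by (metis (mono_tags, lifting) Least_eq_0 funpow_0 zero_enat_def)

lemma vanish_order_eq_1:
  assumes "\<phi> 0 = 0" "deriv \<phi> 0 \<noteq> 0"
  shows "vanish_order \<phi> = 1"
proof -
  have "(LEAST n. (deriv ^^ n) \<phi> 0 \<noteq> 0) = 1"
  proof (rule Least_equality)
    show "(deriv ^^ 1) \<phi> 0 \<noteq> 0" using assms by simp
    fix n assume "(deriv ^^ n) \<phi> 0 \<noteq> 0"
    then show "1 \<le> n" using assms by (cases n) auto
  qed
  moreover have "\<exists>n. (deriv ^^ n) \<phi> 0 \<noteq> 0" using assms by (intro exI[of _ 1]) simp
  ultimately show ?thesis unfolding vanish_order_def by (auto simp: one_enat_def)
qed

lemma vanish_order_gt_1: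
  assumes "\<phi> 0 = 0" "deriv \<phi> 0 = 0"
  shows "1 < vanish_order \<phi>"
proof (cases "\<exists>n. (deriv ^^ n) \<phi> 0 \<noteq> 0")
  case False then show ?thesis unfolding vanish_order_def by simp
next
  case ex: True
  have "2 \<le> (LEAST n. (deriv ^^ n) \<phi> 0 \<noteq> 0)"
  proof (rule LeastI2_ex[OF ex])
    fix n assume "(deriv ^^ n) \<phi> 0 \<noteq> 0"
    then show "2 \<le> n" using assms by (cases n; cases "n - 1") auto
  qed
  then show ?thesis using ex unfolding vanish_order_def by (simp add: one_enat_def)
qed

lemma vanish_order_eq_or_gt_1_iff:
  assumes "(\<phi> has_field_derivative D) (at 0)"
  shows "vanish_order \<phi> = 1 \<longleftrightarrow> \<phi> 0 = 0 \<and> D \<noteq> 0"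
    and "1 < vanish_order \<phi> \<longleftrightarrow> \<phi> 0 = 0 \<and> D = 0"
  using vanish_order_eq_0[of \<phi>] vanish_order_eq_1[of \<phi>] vanish_order_gt_1[of \<phi>] DERIV_imp_deriv[OF assms]
  by (cases "\<phi> 0 = 0"; cases "D = 0"; simp)+

section \<open>A germ and its inverse in coordinates adapted to \<open>[v]\<close>\<close>

locale inverse_pair =
  fixes f g :: "c2 \<Rightarrow> c2" and p v :: c2 and U :: "c2 set"
  assumes U: "open U" "p \<in> U" and hf: "holo2_on U f" and hg: "holo2_on U g"
    and fp: "f p = p" and gp: "g p = p"
    and fd: "(f has_derivative (\<lambda>x. x)) (at p)" and gd: "(g has_derivative (\<lambda>x. x)) (at p)"
    and inv: "\<And>x. x \<in> U \<Longrightarrow> g (f x) = x" and v0: "v \<noteq> 0"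
begin

text \<open>\<open>zc\<close> and \<open>wc\<close> are the coordinates \<open>(z, w)\<close> with respect to the basis \<open>(v, e)\<close>.\<close>

definition "e = compl_vec v"
definition "dd = det2 v e"
definition "zc = lin_form (snd e / dd) (- fst e / dd)"
definition "wc = lin_form (- snd v / dd) (fst v / dd)"

lemma dd_nonzero: "dd \<noteq> 0"
proof -
  have "\<exists>e. det2 v e \<noteq> 0"
  proof (cases "fst v = 0")
    case True
    then have "snd v \<noteq> 0" using v0 by (simp add: prod_eq_iff)
    then show ?thesis using True by (intro exI[of _ "(1,0)"]) (simp add: det2_def)
  next
    case False then show ?thesis by (intro exI[of _ "(0,1)"]) (simp add: det2_def)
  qed
  then have "det2 v (compl_vec v) \<noteq> 0" unfolding compl_vec_def by (rule someI_ex)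
  then show ?thesis by (simp add: dd_def e_def)
qed

lemma zc_eq: "zc y = (snd e * fst y - fst e * snd y) / dd"
  by (simp add: zc_def lin_form_def diff_divide_distrib mult.commute)

lemma wc_eq: "wc y = (fst v * snd y - snd v * fst y) / dd"
  by (simp add: wc_def lin_form_def diff_divide_distrib mult.commute)

lemma dd_eq: "dd = fst v * snd e - snd v * fst e"
  by (simp add: dd_def det2_def)

lemma wc_wcoord: "wcoord v y = wc y"
  by (simp add: wcoord_def wc_eq det2_def dd_def e_def)

lemma frame_decomp: "y = cmul (zc y) v + cmul (wc y) e"
proof -
  have "zc y * fst v + wc y * fst e = fst y * dd / dd" "zc y * snd v + wc y * snd e = snd y * dd / dd"
    by (simp_all add: zc_eq wc_eq add_divide_distrib[symmetric] dd_eq algebra_simps)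
  then show ?thesis using dd_nonzero by (simp add: prod_eq_iff)
qed

lemma coords_basis: "zc v = 1" "wc v = 0" "zc e = 0" "wc e = 1"
  using dd_nonzero by (simp_all add: zc_eq wc_eq dd_eq mult.commute)

lemma zc_linear: "zc (x + y) = zc x + zc y" "zc (cmul c x) = c * zc x" "zc (x - y) = zc x - zc y" "zc 0 = 0"
  by (simp_all add: zc_def lin_form_add lin_form_cmul lin_form_diff lin_form_zero)

lemma wc_linear: "wc (x + y) = wc x + wc y" "wc (cmul c x) = c * wc x" "wc (x - y) = wc x - wc y" "wc 0 = 0"
  by (simp_all add: wc_def lin_form_add lin_form_cmul lin_form_diff lin_form_zero)

definition "f_frame l z w = l (f (p + cmul z v + cmul w e) - p)"
definition "g_frame l z w = l (g (p + cmul z v + cmul w e) - p)"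

lemma bidisc_radius_exists: "\<exists>R. 0 < R \<and>
   bidisc_holomorphic (f_frame zc) R \<and> bidisc_holomorphic (f_frame wc) R \<and>
   bidisc_holomorphic (g_frame zc) R \<and> bidisc_holomorphic (g_frame wc) R \<and>
   (\<forall>z w. norm z \<le> R \<longrightarrow> norm w \<le> R \<longrightarrow> p + cmul z v + cmul w e \<in> U)"
proof -
  obtain \<epsilon> where \<epsilon>: "0 < \<epsilon>" "ball p \<epsilon> \<subseteq> U" using U open_contains_ball by blast
  define R where "R = \<epsilon> / (norm v + norm e + 1)"
  have n1: "0 < norm v + norm e + 1" by (simp add: add_nonneg_pos)
  have R: "0 < R" using \<epsilon> n1 by (simp add: R_def)
  have Rb: "R * (norm v + norm e) < \<epsilon>"
  proof -
    have "R * (norm v + norm e) < R * (norm v + norm e + 1)" using R by simp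
    also have "\<dots> = \<epsilon>" using n1 by (simp add: R_def)
    finally show ?thesis .
  qed
  have "p + cmul z v + cmul w e \<in> U" if "norm z \<le> R" "norm w \<le> R" for z w
  proof -
    have "norm (cmul z v + cmul w e) \<le> R * norm v + R * norm e"
      using norm_triangle_ineq[of "cmul z v" "cmul w e"] that
      by (simp add: norm_cmul) (smt (verit, best) mult_right_mono norm_ge_zero)
    then have "norm (cmul z v + cmul w e) < \<epsilon>" using Rb by (simp add: distrib_left)
    then show ?thesis using \<epsilon> by (auto simp: dist_norm add.assoc simp del: minus_add_distrib)
  qed
  moreover have "bidisc_holomorphic (f_frame l) R" "bidisc_holomorphic (g_frame l) R"
    if "l = zc \<or> l = wc" for l
    using that bidisc_holomorphic_frame[OF hf \<epsilon>(2) R Rb] bidisc_holomorphic_frame[OF hg \<epsilon>(2) R Rb]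
    unfolding f_frame_def g_frame_def zc_def wc_def by auto
  ultimately show ?thesis using R by blast
qed

definition "R0 = (SOME R. 0 < R \<and>
   bidisc_holomorphic (f_frame zc) R \<and> bidisc_holomorphic (f_frame wc) R \<and>
   bidisc_holomorphic (g_frame zc) R \<and> bidisc_holomorphic (g_frame wc) R \<and>
   (\<forall>z w. norm z \<le> R \<longrightarrow> norm w \<le> R \<longrightarrow> p + cmul z v + cmul w e \<in> U))"

lemma R0: "0 < R0"
  "bidisc_holomorphic (f_frame zc) R0" "bidisc_holomorphic (f_frame wc) R0"
  "bidisc_holomorphic (g_frame zc) R0" "bidisc_holomorphic (g_frame wc) R0"
  "\<And>z w. norm z \<le> R0 \<Longrightarrow> norm w \<le> R0 \<Longrightarrow> p + cmul z v + cmul w e \<in> U"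
  using someI_ex[OF bidisc_radius_exists] unfolding R0_def[symmetric] by auto

text \<open>In the paper's normal form \<open>f(z,w) = (z(1 + z\<^sup>r R(z)) + w U, w(1 + z\<^sup>t T(z) + w V) + z\<^sup>s\<^sup>+\<^sup>1 S(z))\<close>:
  \<open>A\<close> and \<open>B\<close> are the two components of \<open>f\<close> on the line \<open>w = 0\<close>, and \<open>Cf\<close>, \<open>Df\<close> their
  \<open>w\<close>-derivatives there, so \<open>A z = z + a z\<^sup>r\<^sup>+\<^sup>1 + \<dots>\<close>, \<open>B z = O(z\<^sup>s\<^sup>+\<^sup>1)\<close>, \<open>Cf z = 1 + b z\<^sup>t + \<dots>\<close>.
  \<open>\<alpha>\<close>, \<open>\<beta>\<close>, \<open>\<gamma>\<close> are the corresponding functions for \<open>g\<close>.\<close>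

definition "A = (\<lambda>z. f_frame zc z 0)"
definition "B = (\<lambda>z. f_frame wc z 0)"
definition "Cf = dw0 (f_frame wc)"
definition "Df = dw0 (f_frame zc)"
definition "\<alpha> = (\<lambda>z. g_frame zc z 0)"
definition "\<beta> = (\<lambda>z. g_frame wc z 0)"
definition "\<gamma> = dw0 (g_frame wc)"

lemma taylor_coeffs_on_line:
  "zc (hpart f p j v) = taylor_coeff A j" "wc (hpart f p j v) = taylor_coeff B j"
  "zc (hpart g p j v) = taylor_coeff \<alpha> j" "wc (hpart g p j v) = taylor_coeff \<beta> j"
  unfolding A_def B_def \<alpha>_def \<beta>_def f_frame_def g_frame_def zc_def wc_def
  by (simp_all add: lin_form_hpart[OF hf U] lin_form_hpart[OF hg U])

lemma wcoord_hpart_has_derivative: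
  assumes h: "holo2_on U h" and b: "bidisc_holomorphic (\<lambda>z w. wc (h (p + cmul z v + cmul w e) - p)) R"
    and j: "1 \<le> j"
  shows "((\<lambda>u. wcoord v (hpart h p j (v + cmul u e))) has_field_derivative
            taylor_coeff (dw0 (\<lambda>z w. wc (h (p + cmul z v + cmul w e) - p))) (j - 1)) (at 0)"
proof -
  have "wcoord v (hpart h p j (v + cmul u e)) = taylor_coeff (\<lambda>t. wc (h (p + cmul t v + cmul (t*u) e) - p)) j"
    for u
    using lin_form_hpart[OF h U] by (simp add: wc_wcoord wc_def cmul_add_right add.assoc)
  then show ?thesis using cone_taylor_coeff_has_derivative[OF b j] by simp
qed

lemma f_on_line: "f (p + cmul \<tau> v) = p + cmul (A \<tau>) v + cmul (B \<tau>) e"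
  using frame_decomp[of "f (p + cmul \<tau> v) - p"] by (simp add: A_def B_def f_frame_def algebra_simps)

lemma inverse_on_line:
  assumes "norm \<tau> \<le> R0"
  shows "g_frame zc (A \<tau>) (B \<tau>) = \<tau>" "g_frame wc (A \<tau>) (B \<tau>) = 0"
proof -
  have "p + cmul \<tau> v \<in> U" using R0(6)[of \<tau> 0] assms R0(1) by simp
  from inv[OF this] have "g (p + cmul (A \<tau>) v + cmul (B \<tau>) e) - p = cmul \<tau> v"
    unfolding f_on_line by simp
  then show "g_frame zc (A \<tau>) (B \<tau>) = \<tau>" "g_frame wc (A \<tau>) (B \<tau>) = 0"
    by (simp_all add: g_frame_def zc_linear wc_linear coords_basis)
qed

text \<open>The chain rule for \<open>g \<circ> f = id\<close> at \<open>p + \<tau> v\<close>, evaluated on \<open>e\<close> and read in the \<open>w\<close>-coordinate.\<close>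

lemma inverse_jacobian_on_line:
  assumes \<tau>: "norm \<tau> \<le> R0" and a: "norm (A \<tau>) \<le> R0" and b: "norm (B \<tau>) \<le> R0"
  shows "Df \<tau> * deriv (\<lambda>z. g_frame wc z (B \<tau>)) (A \<tau>) + Cf \<tau> * deriv (\<lambda>w. g_frame wc (A \<tau>) w) (B \<tau>) = 1"
proof -
  define y0 where "y0 = p + cmul \<tau> v"
  have y0: "y0 \<in> U" using R0(6)[of \<tau> 0] \<tau> R0(1) by (simp add: y0_def)
  have fy: "f y0 = p + cmul (A \<tau>) v + cmul (B \<tau>) e" using f_on_line by (simp add: y0_def)
  have y1: "f y0 \<in> U" using R0(6)[OF a b] fy by simp
  define Lf where "Lf = holo2_deriv f y0"
  define Lg where "Lg = holo2_deriv g (f y0)"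
  have hLf: "(f has_derivative Lf) (at y0)" "\<And>c x. Lf (cmul c x) = cmul c (Lf x)"
    using holo2_deriv[OF hf y0] by (auto simp: Lf_def)
  have hLg: "(g has_derivative Lg) (at (f y0))" "\<And>c x. Lg (cmul c x) = cmul c (Lg x)"
    using holo2_deriv[OF hg y1] by (auto simp: Lg_def)
  have "((\<lambda>x. g (f x)) has_derivative (\<lambda>x. Lg (Lf x))) (at y0)"
    by (rule has_derivative_compose[OF hLf(1) hLg(1)])
  moreover have "((\<lambda>x. g (f x)) has_derivative (\<lambda>x. x)) (at y0)"
    by (rule has_derivative_transform_within_open[OF has_derivative_ident U(1) y0]) (use inv in auto)
  ultimately have "Lg (Lf e) = e" by (metis has_derivative_unique)
  moreover have "Lg (Lf e) = cmul (zc (Lf e)) (Lg v) + cmul (wc (Lf e)) (Lg e)"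
    using frame_decomp[of "Lf e"] has_derivative_bounded_linear[OF hLg(1)] hLg(2)
    by (metis linear_simps(1))
  ultimately have chain: "1 = zc (Lf e) * wc (Lg v) + wc (Lf e) * wc (Lg e)"
    using coords_basis(4) by (metis wc_linear(1) wc_linear(2))
  have "((\<lambda>w. wc (f (p + cmul \<tau> v + cmul w e) - p)) has_field_derivative wc (Lf e)) (at 0)"
    unfolding wc_def by (rule lin_form_line_has_field_derivative) (use hLf in \<open>auto simp: y0_def\<close>)
  then have Cf: "Cf \<tau> = wc (Lf e)" unfolding Cf_def dw0_def f_frame_def by (rule DERIV_imp_deriv)
  have "((\<lambda>w. zc (f (p + cmul \<tau> v + cmul w e) - p)) has_field_derivative zc (Lf e)) (at 0)"
    unfolding zc_def by (rule lin_form_line_has_field_derivative) (use hLf in \<open>auto simp: y0_def\<close>)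
  then have Df: "Df \<tau> = zc (Lf e)" unfolding Df_def dw0_def f_frame_def by (rule DERIV_imp_deriv)
  have "((\<lambda>w. wc (g (p + cmul (A \<tau>) v + cmul w e) - p)) has_field_derivative wc (Lg e)) (at (B \<tau>))"
    unfolding wc_def by (rule lin_form_line_has_field_derivative) (use hLg fy in auto)
  then have Gw: "deriv (\<lambda>w. g_frame wc (A \<tau>) w) (B \<tau>) = wc (Lg e)"
    unfolding g_frame_def by (rule DERIV_imp_deriv)
  have "((\<lambda>z. wc (g ((p + cmul (B \<tau>) e) + cmul z v) - p)) has_field_derivative wc (Lg v)) (at (A \<tau>))"
    unfolding wc_def by (rule lin_form_line_has_field_derivative) (use hLg fy in \<open>auto simp: add_ac\<close>)
  then have "((\<lambda>z. g_frame wc z (B \<tau>)) has_field_derivative wc (Lg v)) (at (A \<tau>))"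
    unfolding g_frame_def by (simp add: add_ac)
  then have Gz: "deriv (\<lambda>z. g_frame wc z (B \<tau>)) (A \<tau>) = wc (Lg v)" by (rule DERIV_imp_deriv)
  show ?thesis using chain Cf Df Gw Gz by simp
qed

lemma dw0_frame_at_0:
  assumes "(h has_derivative (\<lambda>x. x)) (at p)"
  shows "dw0 (\<lambda>z w. wc (h (p + cmul z v + cmul w e) - p)) 0 = 1"
proof -
  have "((\<lambda>w. wc (h (p + cmul 0 v + cmul w e) - p)) has_field_derivative wc e) (at 0)"
    unfolding wc_def by (rule lin_form_line_has_field_derivative[where L="\<lambda>x. x"]) (use assms in auto)
  then show ?thesis unfolding dw0_def using DERIV_imp_deriv coords_basis(4) by metis
qed

lemma f_frame_eq: "f_frame l = (\<lambda>z w. l (f (p + cmul z v + cmul w e) - p))"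
  and g_frame_eq: "g_frame l = (\<lambda>z w. l (g (p + cmul z v + cmul w e) - p))"
  by (simp_all add: f_frame_def g_frame_def fun_eq_iff)

lemma Cf_0: "Cf 0 = 1" and \<gamma>_0: "\<gamma> 0 = 1"
  using dw0_frame_at_0[OF fd] dw0_frame_at_0[OF gd] by (simp_all add: Cf_def \<gamma>_def f_frame_eq g_frame_eq)

lemma line_functions_holomorphic:
  "A holomorphic_on ball 0 R0" "B holomorphic_on ball 0 R0" "\<alpha> holomorphic_on ball 0 R0"
  "\<beta> holomorphic_on ball 0 R0" "Cf holomorphic_on ball 0 R0" "Df holomorphic_on ball 0 R0"
  "\<gamma> holomorphic_on ball 0 R0"
  using bidisc_holomorphic_in_z[OF R0(2), of 0] bidisc_holomorphic_in_z[OF R0(3), of 0]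
    bidisc_holomorphic_in_z[OF R0(4), of 0] bidisc_holomorphic_in_z[OF R0(5), of 0]
    dw0_holomorphic(1)[OF R0(3)] dw0_holomorphic(1)[OF R0(2)] dw0_holomorphic(1)[OF R0(5)] R0(1)
  unfolding A_def B_def \<alpha>_def \<beta>_def Cf_def Df_def \<gamma>_def by auto

lemma taylor_coeffs_A_B_low:
  "taylor_coeff A 0 = 0" "taylor_coeff A 1 = 1" "taylor_coeff B 0 = 0" "taylor_coeff B 1 = 0"
  using taylor_coeffs_on_line(1,2)[of 0] taylor_coeffs_on_line(1,2)[of 1] hpart_0[of f p, OF fp]
    hpart_1_tangent[OF fd]
  by (simp_all add: zc_linear wc_linear coords_basis)

lemma A_near_identity: "bigO0 2 (\<lambda>t. A t - t)"
proof -
  have "bigO0 (Suc 1) (\<lambda>t. A t - (0 * t^0 + 1 * t^1))"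
    by (rule bigO0_sub_two_terms[OF line_functions_holomorphic(1) R0(1)])
       (use taylor_coeffs_A_B_low in \<open>auto simp: le_Suc_eq\<close>)
  then show ?thesis by (simp add: numeral_2_eq_2)
qed

lemma A_bound: obtains d where "0 < d" "\<And>t. norm t < d \<Longrightarrow> norm (A t) \<le> 2 * norm t"
  using near_identity_bound[OF A_near_identity] by blast

lemma small_radius_exists:
  "\<exists>d>0. \<forall>t::complex. norm t < d \<longrightarrow> norm t \<le> R0/4 \<and> norm (A t) \<le> R0/4 \<and> norm (B t) \<le> R0/4"
proof -
  obtain d1 where d1: "0 < d1" "\<And>t. norm t < d1 \<Longrightarrow> norm (A t) \<le> 2 * norm t"
    by (meson A_bound)
  have "bigO0 2 B"
    by (rule bigO0_of_taylor_coeff_zero[OF line_functions_holomorphic(2) R0(1)])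
       (use taylor_coeffs_A_B_low in \<open>auto simp: numeral_2_eq_2 less_Suc_eq\<close>)
  then obtain C d2 where d2: "0 \<le> C" "0 < d2" "\<And>t. norm t < d2 \<Longrightarrow> norm (B t) \<le> C * norm t ^ 2"
    by (meson bigO0E)
  define d where "d = min (min d1 d2) (min (R0/8) (min 1 (R0/(4*(C+1)))))"
  have d: "0 < d" using d1 d2 R0(1) by (simp add: d_def)
  show ?thesis
  proof (rule exI[of _ d], intro conjI d allI impI)
    fix t :: complex assume t: "norm t < d"
    show "norm t \<le> R0/4" using t R0(1) by (simp add: d_def)
    show "norm (A t) \<le> R0/4" using d1(2)[of t] t by (simp add: d_def)
    have "norm (B t) \<le> C * norm t ^ 2" using d2(3)[of t] t by (simp add: d_def)
    also have "\<dots> \<le> C * norm t" using t d2(1)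
      by (intro mult_left_mono) (auto simp: d_def power2_eq_square mult_left_le_one_le)
    also have "\<dots> \<le> (C + 1) * norm t" by (simp add: mult_right_mono)
    also have "\<dots> \<le> (C + 1) * (R0/(4*(C+1)))" using t d2(1) by (intro mult_left_mono) (auto simp: d_def)
    also have "\<dots> = R0/4" using d2(1) by (simp add: field_simps)
    finally show "norm (B t) \<le> R0/4" .
  qed
qed

definition "ds = (SOME d. 0 < d \<and>
  (\<forall>t::complex. norm t < d \<longrightarrow> norm t \<le> R0/4 \<and> norm (A t) \<le> R0/4 \<and> norm (B t) \<le> R0/4))"

lemma ds: "0 < ds" "\<And>t::complex. norm t < ds \<Longrightarrow> norm t \<le> R0/4"
  "\<And>t. norm t < ds \<Longrightarrow> norm (A t) \<le> R0/4" "\<And>t. norm t < ds \<Longrightarrow> norm (B t) \<le> R0/4"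
  using someI_ex[OF small_radius_exists] unfolding ds_def[symmetric] by auto

text \<open>Expanding \<open>g_frame wc (A \<tau>) (B \<tau>) = 0\<close> to first order in \<open>B \<tau>\<close>.\<close>

lemma beta_gamma_expansion:
  obtains K L where "0 \<le> K" "0 \<le> L"
    "\<And>t. norm t < ds \<Longrightarrow> norm (\<beta> (A t)) \<le> L * norm (B t)"
    "\<And>t. norm t < ds \<Longrightarrow> norm (\<beta> (A t) + B t * \<gamma> (A t)) \<le> K * norm (B t * B t)"
proof -
  obtain K L where KL: "0 \<le> K" "0 \<le> L"
    "\<And>z w. norm z \<le> R0 \<Longrightarrow> norm w \<le> R0/2 \<Longrightarrow> norm (g_frame wc z w - g_frame wc z 0) \<le> L * norm w"
    "\<And>z w. norm z \<le> R0 \<Longrightarrow> norm w \<le> R0/2 \<Longrightarrow>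
       norm (g_frame wc z w - g_frame wc z 0 - w * dw0 (g_frame wc) z) \<le> K * norm w ^ 2"
    by (rule bidisc_expansion_in_w[OF R0(5)]) blast
  show ?thesis
  proof (rule that[OF KL(1,2)])
    fix t :: complex assume t: "norm t < ds"
    have a: "norm (A t) \<le> R0" and b: "norm (B t) \<le> R0/2" and tt: "norm t \<le> R0"
      using ds(2-4)[OF t] R0(1) by auto
    have r1: "g_frame wc (A t) (B t) = 0" by (rule inverse_on_line(2)[OF tt])
    show "norm (\<beta> (A t)) \<le> L * norm (B t)"
      using KL(3)[OF a b] r1 by (simp add: \<beta>_def)
    have "norm (\<beta> (A t) + B t * \<gamma> (A t))
        = norm (g_frame wc (A t) (B t) - g_frame wc (A t) 0 - B t * dw0 (g_frame wc) (A t))"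
      using r1 norm_minus_cancel[of "\<beta> (A t) + B t * \<gamma> (A t)"] by (simp add: \<beta>_def \<gamma>_def)
    also have "\<dots> \<le> K * norm (B t) ^ 2" by (rule KL(4)[OF a b])
    finally show "norm (\<beta> (A t) + B t * \<gamma> (A t)) \<le> K * norm (B t * B t)"
      by (simp add: norm_mult power2_eq_square)
  qed
qed

lemma taylor_coeff_beta_eq_0:
  assumes z: "\<And>i. i \<le> j \<Longrightarrow> taylor_coeff B i = 0"
  shows "taylor_coeff \<beta> j = 0"
proof -
  obtain K L where KL: "0 \<le> K" "0 \<le> L"
    "\<And>t. norm t < ds \<Longrightarrow> norm (\<beta> (A t)) \<le> L * norm (B t)"
    "\<And>t. norm t < ds \<Longrightarrow> norm (\<beta> (A t) + B t * \<gamma> (A t)) \<le> K * norm (B t * B t)"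
    by (rule beta_gamma_expansion) blast
  have "bigO0 (Suc j) B"
    by (rule bigO0_of_taylor_coeff_zero[OF line_functions_holomorphic(2) R0(1)]) (use z in auto)
  then have "bigO0 (Suc j) (\<lambda>t. \<beta> (A t) - 0 * t ^ j)" using bigO0_le[OF _ ds(1) KL(3)] by simp
  from taylor_coeffs_of_bigO0_compose[OF line_functions_holomorphic(4) R0(1) A_near_identity this]
  show ?thesis by simp
qed

lemma gamma_A_bigO0: "bigO0 1 (\<lambda>t. \<gamma> (A t) - 1)" "bigO0 0 (\<lambda>t. \<gamma> (A t))"
proof -
  obtain d where d: "0 < d" "\<And>t. norm t < d \<Longrightarrow> norm (A t) \<le> 2 * norm t"
    by (meson A_bound)
  have "bigO0 (Suc 0) (\<lambda>t. \<gamma> t - taylor_coeff \<gamma> 0 * t ^ 0)"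
    by (rule bigO0_sub_leading_term[OF line_functions_holomorphic(7) R0(1)]) auto
  then have "bigO0 1 (\<lambda>t. \<gamma> t - 1)" using \<gamma>_0 by (simp add: taylor_coeff_def)
  from bigO0_compose[OF this d] show b1: "bigO0 1 (\<lambda>t. \<gamma> (A t) - 1)" .
  have "bigO0 0 (\<lambda>t. (\<gamma> (A t) - 1) + 1 * t ^ 0)"
    by (rule bigO0_add[OF bigO0_mono[OF b1] bigO0_monomial]) auto
  then show "bigO0 0 (\<lambda>t. \<gamma> (A t))" by simp
qed

text \<open>\<open>\<beta> \<circ> A = -B \<cdot> (\<gamma> \<circ> A) + O(B\<^sup>2)\<close> and \<open>\<gamma>(0) = 1\<close>: the first nonzero coefficients of
  \<open>B\<close> and \<open>\<beta>\<close> are opposite.\<close>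

lemma taylor_coeff_beta_leading:
  assumes z: "\<And>j. j \<le> n \<Longrightarrow> taylor_coeff B j = 0"
  shows "taylor_coeff \<beta> (Suc n) = - taylor_coeff B (Suc n)"
proof -
  define c where "c = taylor_coeff B (Suc n)"
  have B1: "bigO0 (Suc (Suc n)) (\<lambda>t. B t - c * t ^ Suc n)"
    unfolding c_def by (rule bigO0_sub_leading_term[OF line_functions_holomorphic(2) R0(1)]) (use z in auto)
  have B0: "bigO0 (Suc n) B"
    by (rule bigO0_of_taylor_coeff_zero[OF line_functions_holomorphic(2) R0(1)]) (use z in auto)
  obtain K L where KL: "0 \<le> K" "0 \<le> L"
    "\<And>t. norm t < ds \<Longrightarrow> norm (\<beta> (A t)) \<le> L * norm (B t)"
    "\<And>t. norm t < ds \<Longrightarrow> norm (\<beta> (A t) + B t * \<gamma> (A t)) \<le> K * norm (B t * B t)"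
    by (rule beta_gamma_expansion) blast
  have "bigO0 (Suc (Suc n)) (\<lambda>t. \<beta> (A t) + B t * \<gamma> (A t))"
    by (rule bigO0_mono[OF bigO0_le[OF bigO0_mult[OF B0 B0] ds(1) KL(4)]]) auto
  moreover have "bigO0 (Suc (Suc n)) (\<lambda>t. (B t - c * t ^ Suc n) * \<gamma> (A t))"
    using bigO0_mult[OF B1 gamma_A_bigO0(2)] by simp
  moreover have "bigO0 (Suc (Suc n)) (\<lambda>t. c * t ^ Suc n * (\<gamma> (A t) - 1))"
    using bigO0_mult[OF bigO0_monomial[of "Suc n" c] gamma_A_bigO0(1)] by simp
  ultimately have "bigO0 (Suc (Suc n)) (\<lambda>t. (\<beta> (A t) + B t * \<gamma> (A t)) - (B t - c * t ^ Suc n) * \<gamma> (A t)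
                                - c * t ^ Suc n * (\<gamma> (A t) - 1))"
    by (intro bigO0_diff)
  then have "bigO0 (Suc (Suc n)) (\<lambda>t. \<beta> (A t) - (- c) * t ^ Suc n)"
    by (simp add: algebra_simps)
  from taylor_coeffs_of_bigO0_compose[OF line_functions_holomorphic(4) R0(1) A_near_identity this]
  show ?thesis by (simp add: c_def)
qed

text \<open>\<open>\<alpha> \<circ> A = id + O(B)\<close>, so \<open>\<alpha>\<close> inverts \<open>A\<close> up to order \<open>r + 1\<close>.\<close>

lemma taylor_coeffs_alpha:
  assumes zB: "\<And>j. j \<le> Suc r \<Longrightarrow> taylor_coeff B j = 0"
    and Az: "\<And>j. 2 \<le> j \<Longrightarrow> j \<le> r \<Longrightarrow> taylor_coeff A j = 0"
    and Ar: "taylor_coeff A (Suc r) = a" and r: "1 \<le> r"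
  shows "\<And>j. j \<le> r \<Longrightarrow> taylor_coeff \<alpha> j = (if j = 1 then 1 else 0)" "taylor_coeff \<alpha> (Suc r) = - a"
proof -
  have bB: "bigO0 (Suc (Suc r)) B"
    by (rule bigO0_of_taylor_coeff_zero[OF line_functions_holomorphic(2) R0(1)]) (use zB in auto)
  obtain K L where KL: "0 \<le> K" "0 \<le> L"
    "\<And>z w. norm z \<le> R0 \<Longrightarrow> norm w \<le> R0/2 \<Longrightarrow> norm (g_frame zc z w - g_frame zc z 0) \<le> L * norm w"
    "\<And>z w. norm z \<le> R0 \<Longrightarrow> norm w \<le> R0/2 \<Longrightarrow>
       norm (g_frame zc z w - g_frame zc z 0 - w * dw0 (g_frame zc) z) \<le> K * norm w ^ 2"
    by (rule bidisc_expansion_in_w[OF R0(4)]) blast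
  have "bigO0 (Suc (Suc r)) (\<lambda>t. \<alpha> (A t) - t)"
  proof (rule bigO0_le[OF bB ds(1)])
    fix t :: complex assume t: "norm t < ds"
    have a: "norm (A t) \<le> R0" and b: "norm (B t) \<le> R0/2" and tt: "norm t \<le> R0"
      using ds(2-4)[OF t] R0(1) by auto
    show "norm (\<alpha> (A t) - t) \<le> L * norm (B t)"
      using KL(3)[OF a b] inverse_on_line(1)[OF tt] by (simp add: \<alpha>_def norm_minus_commute)
  qed
  moreover have "bigO0 (Suc (Suc r)) (\<lambda>t. A t - (1 * t ^ 1 + a * t ^ Suc r))"
  proof (rule bigO0_sub_two_terms[OF line_functions_holomorphic(1) R0(1)])
    fix j assume j: "j \<le> Suc r"
    show "taylor_coeff A j = (if j = 1 then 1 else if j = Suc r then a else 0)"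
      using taylor_coeffs_A_B_low Ar r Az[of j] j by (cases "j = 0 \<or> j = 1 \<or> j = Suc r") auto
  qed (use r in auto)
  ultimately have "bigO0 (Suc (Suc r)) (\<lambda>t. (\<alpha> (A t) - t) - (A t - (1 * t ^ 1 + a * t ^ Suc r)))"
    by (rule bigO0_diff)
  then have b: "bigO0 (Suc (Suc r)) (\<lambda>t. (\<alpha> (A t) - 1 * A t) - (- a) * t ^ Suc r)"
    by (simp add: algebra_simps)
  have hol: "(\<lambda>z. \<alpha> z - 1 * z) holomorphic_on ball 0 R0"
    by (intro holomorphic_intros line_functions_holomorphic(3))
  have tc: "(\<forall>j<Suc r. taylor_coeff (\<lambda>z. \<alpha> z - 1 * z) j = 0) \<and> taylor_coeff (\<lambda>z. \<alpha> z - 1 * z) (Suc r) = - a"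
    by (rule taylor_coeffs_of_bigO0_compose[OF hol R0(1) A_near_identity b])
  have tm: "taylor_coeff (\<lambda>z. \<alpha> z - 1 * z) j = taylor_coeff \<alpha> j - (if j = 1 then 1 else 0)" for j
    by (rule taylor_coeff_diff_linear[OF line_functions_holomorphic(3) R0(1)])
  show "taylor_coeff \<alpha> j = (if j = 1 then 1 else 0)" if "j \<le> r" for j
    using tc tm[of j] that by (auto simp: less_Suc_eq_le)
  show "taylor_coeff \<alpha> (Suc r) = - a" using tc tm[of "Suc r"] r by simp
qed

text \<open>By \<open>inverse_jacobian_on_line\<close>, \<open>\<gamma>(A \<tau>) Cf(\<tau>) - 1\<close> is a combination of \<open>\<partial>\<^sub>z g\<^sub>w(A, B)\<close> and
  \<open>\<partial>\<^sub>w g\<^sub>w(A, B) - \<gamma>(A)\<close>, which are controlled by \<open>\<beta>' \<circ> A\<close> and by \<open>B\<close>.\<close>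

lemma g_frame_partials_bigO0:
  assumes z\<beta>: "\<And>j. j \<le> Suc t \<Longrightarrow> taylor_coeff \<beta> j = 0"
    and zB: "\<And>j. j \<le> t \<Longrightarrow> taylor_coeff B j = 0"
  shows "bigO0 (Suc t) (\<lambda>\<tau>. deriv (\<lambda>z. g_frame wc z (B \<tau>)) (A \<tau>))"
    and "bigO0 (Suc t) (\<lambda>\<tau>. deriv (\<lambda>w. g_frame wc (A \<tau>) w) (B \<tau>) - \<gamma> (A \<tau>))"
proof -
  obtain dA where dA: "0 < dA" "\<And>t. norm t < dA \<Longrightarrow> norm (A t) \<le> 2 * norm t"
    by (meson A_bound)
  have "bigO0 (Suc t) (deriv \<beta>)"
    by (rule bigO0_of_taylor_coeff_zero[OF holomorphic_deriv[OF line_functions_holomorphic(4) open_ball] R0(1)])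
       (use z\<beta> in \<open>auto simp: taylor_coeff_deriv\<close>)
  then have \<beta>'A: "bigO0 (Suc t) (\<lambda>\<tau>. deriv \<beta> (A \<tau>))" using dA by (rule bigO0_compose)
  have bB: "bigO0 (Suc t) B"
    by (rule bigO0_of_taylor_coeff_zero[OF line_functions_holomorphic(2) R0(1)]) (use zB in auto)
  obtain K4 where K4: "0 \<le> K4"
    "\<And>z w. norm z \<le> R0/2 \<Longrightarrow> norm w \<le> R0/2 \<Longrightarrow>
       norm (deriv (\<lambda>z. g_frame wc z w) z - deriv (\<lambda>z. g_frame wc z 0) z) \<le> K4 * norm w"
    by (rule bidisc_dz_lipschitz[OF R0(5)]) blast
  obtain K3 where K3: "0 \<le> K3"
    "\<And>z w. norm z \<le> R0 \<Longrightarrow> norm w \<le> R0/4 \<Longrightarrow>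
       norm (deriv (\<lambda>w. g_frame wc z w) w - dw0 (g_frame wc) z) \<le> K3 * norm w"
    by (rule bidisc_dw_lipschitz[OF R0(5)]) blast
  have "bigO0 (Suc t) (\<lambda>\<tau>. deriv (\<lambda>z. g_frame wc z (B \<tau>)) (A \<tau>) - deriv \<beta> (A \<tau>))"
  proof (rule bigO0_le[OF bB ds(1)])
    fix \<tau> :: complex assume \<tau>: "norm \<tau> < ds"
    have "norm (A \<tau>) \<le> R0/2" "norm (B \<tau>) \<le> R0/2" using ds(3,4)[OF \<tau>] R0(1) by auto
    moreover have "deriv \<beta> = deriv (\<lambda>z. g_frame wc z 0)" by (simp add: \<beta>_def)
    ultimately show "norm (deriv (\<lambda>z. g_frame wc z (B \<tau>)) (A \<tau>) - deriv \<beta> (A \<tau>)) \<le> K4 * norm (B \<tau>)"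
      using K4(2) by simp
  qed
  from bigO0_add[OF this \<beta>'A] show "bigO0 (Suc t) (\<lambda>\<tau>. deriv (\<lambda>z. g_frame wc z (B \<tau>)) (A \<tau>))" by simp
  show "bigO0 (Suc t) (\<lambda>\<tau>. deriv (\<lambda>w. g_frame wc (A \<tau>) w) (B \<tau>) - \<gamma> (A \<tau>))"
  proof (rule bigO0_le[OF bB ds(1)])
    fix \<tau> :: complex assume \<tau>: "norm \<tau> < ds"
    have "norm (A \<tau>) \<le> R0" "norm (B \<tau>) \<le> R0/4" using ds(3,4)[OF \<tau>] R0(1) by auto
    then show "norm (deriv (\<lambda>w. g_frame wc (A \<tau>) w) (B \<tau>) - \<gamma> (A \<tau>)) \<le> K3 * norm (B \<tau>)"
      using K3(2) by (simp add: \<gamma>_def)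
  qed
qed

lemma gamma_A_Cf_bigO0:
  assumes z\<beta>: "\<And>j. j \<le> Suc t \<Longrightarrow> taylor_coeff \<beta> j = 0"
    and zB: "\<And>j. j \<le> t \<Longrightarrow> taylor_coeff B j = 0"
  shows "bigO0 (Suc t) (\<lambda>\<tau>. \<gamma> (A \<tau>) * Cf \<tau> - 1)"
proof -
  define Gz where "Gz = (\<lambda>\<tau>. deriv (\<lambda>z. g_frame wc z (B \<tau>)) (A \<tau>))"
  define Gw where "Gw = (\<lambda>\<tau>. deriv (\<lambda>w. g_frame wc (A \<tau>) w) (B \<tau>))"
  have bCf: "bigO0 0 Cf" and bDf: "bigO0 0 Df"
    using bigO0_of_holomorphic[OF line_functions_holomorphic(5) R0(1)]
      bigO0_of_holomorphic[OF line_functions_holomorphic(6) R0(1)] .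
  have "bigO0 (Suc t) (\<lambda>\<tau>. - (Df \<tau> * Gz \<tau>) - Cf \<tau> * (Gw \<tau> - \<gamma> (A \<tau>)))"
    using bigO0_diff[OF bigO0_minus[OF bigO0_mult[OF bDf g_frame_partials_bigO0(1)[OF z\<beta> zB]]]
        bigO0_mult[OF bCf g_frame_partials_bigO0(2)[OF z\<beta> zB]]]
    by (simp add: Gz_def Gw_def)
  then show ?thesis
  proof (rule bigO0_cong[OF _ ds(1)])
    fix \<tau> :: complex assume \<tau>: "norm \<tau> < ds"
    have "norm (A \<tau>) \<le> R0" "norm (B \<tau>) \<le> R0" "norm \<tau> \<le> R0" using ds(2-4)[OF \<tau>] R0(1) by auto
    then have "Df \<tau> * Gz \<tau> + Cf \<tau> * Gw \<tau> = 1" using inverse_jacobian_on_line by (simp add: Gz_def Gw_def)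
    then show "- (Df \<tau> * Gz \<tau>) - Cf \<tau> * (Gw \<tau> - \<gamma> (A \<tau>)) = \<gamma> (A \<tau>) * Cf \<tau> - 1"
      by (simp add: algebra_simps)
  qed
qed

lemma taylor_coeffs_gamma:
  assumes E: "bigO0 (Suc t) (\<lambda>\<tau>. \<gamma> (A \<tau>) * Cf \<tau> - 1)"
    and C0: "taylor_coeff Cf 0 = 1" and Cz: "\<And>j. 1 \<le> j \<Longrightarrow> j < t \<Longrightarrow> taylor_coeff Cf j = 0"
    and Ct: "taylor_coeff Cf t = b" and t1: "1 \<le> t"
  shows "\<And>j. j < t \<Longrightarrow> taylor_coeff \<gamma> j = (if j = 0 then 1 else 0)" "taylor_coeff \<gamma> t = - b"
proof -
  have bC: "bigO0 (Suc t) (\<lambda>\<tau>. Cf \<tau> - (1 * \<tau> ^ 0 + b * \<tau> ^ t))"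
  proof (rule bigO0_sub_two_terms[OF line_functions_holomorphic(5) R0(1)])
    fix j assume "j \<le> t"
    then show "taylor_coeff Cf j = (if j = 0 then 1 else if j = t then b else 0)"
      using C0 Ct Cz[of j] t1 by auto
  qed (use t1 in auto)
  have "bigO0 (Suc 0) (\<lambda>\<tau>. Cf \<tau> - taylor_coeff Cf 0 * \<tau> ^ 0)"
    by (rule bigO0_sub_leading_term[OF line_functions_holomorphic(5) R0(1)]) auto
  then have bC1: "bigO0 1 (\<lambda>\<tau>. Cf \<tau> - 1)" using C0 by simp
  define G where "G = (\<lambda>\<tau>. (\<gamma> (A \<tau>) - 1) - (- b) * \<tau> ^ t)"
  have "bigO0 (Suc t) (\<lambda>\<tau>. (\<gamma> (A \<tau>) * Cf \<tau> - 1) - (Cf \<tau> - (1 * \<tau> ^ 0 + b * \<tau> ^ t))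
      + b * \<tau> ^ t * (Cf \<tau> - 1))"
    using bigO0_mult[OF bigO0_monomial[of t b] bC1] by (intro bigO0_add bigO0_diff E bC) simp
  then have GC: "bigO0 (Suc t) (\<lambda>\<tau>. G \<tau> * Cf \<tau>)" by (simp add: G_def algebra_simps)
  obtain C d where Cd: "0 \<le> C" "0 < d" "\<And>\<tau>. norm \<tau> < d \<Longrightarrow> norm (Cf \<tau> - 1) \<le> C * norm \<tau> ^ 1"
    using bC1 by (meson bigO0E)
  have lowC: "1/2 \<le> norm (Cf \<tau>)" if \<tau>: "norm \<tau> < min d (1 / (2 * (C + 1)))" for \<tau>
  proof -
    have "norm (Cf \<tau> - 1) \<le> (C + 1) * norm \<tau>"
      using Cd(3)[of \<tau>] \<tau> by (simp add: mult_right_mono order_trans)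
    also have "\<dots> \<le> (C + 1) * (1 / (2 * (C + 1)))" using \<tau> Cd(1) by (intro mult_left_mono) auto
    also have "\<dots> = 1/2" using Cd(1) by simp
    finally show ?thesis using norm_triangle_ineq4[of "Cf \<tau>" "Cf \<tau> - 1"] by simp
  qed
  have "bigO0 (Suc t) G"
    by (rule bigO0_cancel_factor[OF GC, where d="min d (1 / (2 * (C + 1)))" and c="1/2"]) (use Cd lowC in auto)
  then have tc: "(\<forall>j<t. taylor_coeff (\<lambda>z. \<gamma> z - 1) j = 0) \<and> taylor_coeff (\<lambda>z. \<gamma> z - 1) t = - b"
    by (intro taylor_coeffs_of_bigO0_compose[OF _ R0(1) A_near_identity])
       (auto simp: G_def intro!: holomorphic_intros line_functions_holomorphic(7))
  have tm: "taylor_coeff (\<lambda>z. \<gamma> z - 1) j = taylor_coeff \<gamma> j - (if j = 0 then 1 else 0)" for j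
    by (rule taylor_coeff_diff_const[OF line_functions_holomorphic(7) R0(1)])
  show "taylor_coeff \<gamma> j = (if j = 0 then 1 else 0)" if "j < t" for j
    using tc tm[of j] that by auto
  show "taylor_coeff \<gamma> t = - b" using tc tm[of t] t1 by simp
qed

lemma char_dir_iff_wc: "char_dir Q v \<longleftrightarrow> wc (Q v) = 0"
proof
  assume "char_dir Q v"
  then obtain c where "Q v = cmul c v" unfolding char_dir_def by blast
  then show "wc (Q v) = 0" by (simp add: wc_linear coords_basis)
next
  assume "wc (Q v) = 0"
  then have "Q v = cmul (zc (Q v)) v" using frame_decomp[of "Q v"] by simp
  then show "char_dir Q v" using v0 unfolding char_dir_def by blast
qed

lemma degenerate_char_dir_iff: "degenerate_char_dir Q v \<longleftrightarrow> zc (Q v) = 0 \<and> wc (Q v) = 0"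
  using frame_decomp[of "Q v"] v0 unfolding degenerate_char_dir_def by (auto simp: zc_linear wc_linear)

lemma nondegenerate_char_dir_iff: "nondegenerate_char_dir Q v \<longleftrightarrow> zc (Q v) \<noteq> 0 \<and> wc (Q v) = 0"
proof
  assume "nondegenerate_char_dir Q v"
  then obtain c where "c \<noteq> 0" "Q v = cmul c v" unfolding nondegenerate_char_dir_def by blast
  then show "zc (Q v) \<noteq> 0 \<and> wc (Q v) = 0" by (simp add: zc_linear wc_linear coords_basis)
next
  assume w: "zc (Q v) \<noteq> 0 \<and> wc (Q v) = 0"
  then have "Q v = cmul (zc (Q v)) v" using frame_decomp[of "Q v"] by simp
  then show "nondegenerate_char_dir Q v" using v0 w unfolding nondegenerate_char_dir_def by blast
qed

lemma coef_a_eq_zc: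
  assumes "wc (hpart h p (r + 1) v) = 0"
  shows "coef_a h p v r = zc (hpart h p (r + 1) v)"
proof -
  have "hpart h p (r + 1) v = cmul (zc (hpart h p (r + 1) v)) v"
    using frame_decomp[of "hpart h p (r + 1) v"] assms by simp
  then have "hpart h p (r + 1) v = cmul (coef_a h p v r) v" unfolding coef_a_def by (rule someI)
  then show ?thesis by (simp add: zc_linear coords_basis)
qed

lemma lj_iff_and_coef_b:
  assumes h: "holo2_on U h" and b: "bidisc_holomorphic (\<lambda>z w. wc (h (p + cmul z v + cmul w e) - p)) R"
  defines "D \<equiv> dw0 (\<lambda>z w. wc (h (p + cmul z v + cmul w e) - p))"
  shows "1 \<le> j \<Longrightarrow> lj h p v j = 1 \<longleftrightarrow> wc (hpart h p j v) = 0 \<and> taylor_coeff D (j - 1) \<noteq> 0"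
    and "1 \<le> j \<Longrightarrow> 1 < lj h p v j \<longleftrightarrow> wc (hpart h p j v) = 0 \<and> taylor_coeff D (j - 1) = 0"
    and "coef_b h p v t = taylor_coeff D t"
proof -
  have d: "((\<lambda>u. wcoord v (hpart h p j (v + cmul u e))) has_field_derivative taylor_coeff D (j - 1)) (at 0)"
    if "1 \<le> j" for j
    unfolding D_def by (rule wcoord_hpart_has_derivative[OF h b that])
  show "1 \<le> j \<Longrightarrow> lj h p v j = 1 \<longleftrightarrow> wc (hpart h p j v) = 0 \<and> taylor_coeff D (j - 1) \<noteq> 0"
    "1 \<le> j \<Longrightarrow> 1 < lj h p v j \<longleftrightarrow> wc (hpart h p j v) = 0 \<and> taylor_coeff D (j - 1) = 0"
    using vanish_order_eq_or_gt_1_iff[OF d] unfolding lj_def e_def[symmetric] by (auto simp: wc_wcoord)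
  show "coef_b h p v t = taylor_coeff D t"
    using DERIV_imp_deriv[OF d[of "t + 1"]] unfolding coef_b_def e_def by simp
qed

lemma lj_f_iff:
  assumes "1 \<le> j"
  shows "lj f p v j = 1 \<longleftrightarrow> taylor_coeff B j = 0 \<and> taylor_coeff Cf (j - 1) \<noteq> 0"
    and "1 < lj f p v j \<longleftrightarrow> taylor_coeff B j = 0 \<and> taylor_coeff Cf (j - 1) = 0"
  using lj_iff_and_coef_b(1,2)[OF hf R0(3)[unfolded f_frame_eq] assms] taylor_coeffs_on_line(2)
  by (simp_all add: Cf_def f_frame_eq)

lemma lj_g_iff:
  assumes "1 \<le> j"
  shows "lj g p v j = 1 \<longleftrightarrow> taylor_coeff \<beta> j = 0 \<and> taylor_coeff \<gamma> (j - 1) \<noteq> 0"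
    and "1 < lj g p v j \<longleftrightarrow> taylor_coeff \<beta> j = 0 \<and> taylor_coeff \<gamma> (j - 1) = 0"
  using lj_iff_and_coef_b(1,2)[OF hg R0(5)[unfolded g_frame_eq] assms] taylor_coeffs_on_line(4)
  by (simp_all add: \<gamma>_def g_frame_eq)

lemma coef_b_f: "coef_b f p v t = taylor_coeff Cf t"
  and coef_b_g: "coef_b g p v t = taylor_coeff \<gamma> t"
  using lj_iff_and_coef_b(3)[OF hf R0(3)[unfolded f_frame_eq]] lj_iff_and_coef_b(3)[OF hg R0(5)[unfolded g_frame_eq]]
  by (simp_all add: Cf_def \<gamma>_def f_frame_eq g_frame_eq)

context
  fixes k :: nat
  assumes order: "has_order f p (k + 1)"
begin

lemma k_ge_1: "1 \<le> k"
  using order unfolding has_order_def by auto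

lemma hpart_below_order: "2 \<le> j \<Longrightarrow> j \<le> k \<Longrightarrow> hpart f p j = (\<lambda>x. 0)"
  using order unfolding has_order_def by auto

lemma taylor_coeffs_B:
  assumes cond1: "char_dir_degree f p k v s"
  shows "enat j \<le> s \<Longrightarrow> taylor_coeff B j = 0" and "s = enat n \<Longrightarrow> taylor_coeff B (Suc n) \<noteq> 0"
proof -
  show "taylor_coeff B j = 0" if j: "enat j \<le> s"
  proof (cases "j \<le> k")
    case True
    then show ?thesis
      using taylor_coeffs_A_B_low hpart_below_order[of j] taylor_coeffs_on_line(2)[of j]
      by (cases "j \<le> 1") (auto simp: le_Suc_eq wc_linear)
  next
    case False
    then have "char_dir (hpart f p j) v" using cond1 j unfolding char_dir_degree_def by auto
    then show ?thesis using char_dir_iff_wc taylor_coeffs_on_line(2) by simp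
  qed
  show "s = enat n \<Longrightarrow> taylor_coeff B (Suc n) \<noteq> 0"
    using cond1 char_dir_iff_wc taylor_coeffs_on_line(2) unfolding char_dir_degree_def by auto
qed

lemma taylor_coeffs_A:
  assumes cond2: "nondeg_degree f p k v r"
  shows "2 \<le> j \<Longrightarrow> j \<le> r \<Longrightarrow> taylor_coeff A j = 0"
    and "taylor_coeff A (Suc r) = coef_a f p v r" and "coef_a f p v r \<noteq> 0"
proof -
  show "taylor_coeff A j = 0" if "2 \<le> j" "j \<le> r"
  proof (cases "j \<le> k")
    case True then show ?thesis
      using hpart_below_order[of j] that taylor_coeffs_on_line(1)[of j] by (simp add: zc_linear)
  next
    case False
    then have "degenerate_char_dir (hpart f p j) v" using cond2 that unfolding nondeg_degree_def by auto
    then show ?thesis using degenerate_char_dir_iff taylor_coeffs_on_line(1) by simp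
  qed
  have "nondegenerate_char_dir (hpart f p (r + 1)) v" using cond2 unfolding nondeg_degree_def by auto
  then have "zc (hpart f p (r + 1) v) \<noteq> 0" "wc (hpart f p (r + 1) v) = 0"
    using nondegenerate_char_dir_iff by auto
  then show "taylor_coeff A (Suc r) = coef_a f p v r" "coef_a f p v r \<noteq> 0"
    using coef_a_eq_zc taylor_coeffs_on_line(1)[of "r + 1"] by auto
qed

lemma taylor_coeffs_Cf:
  assumes cond3: "order_one_degree f p k v t"
  shows "taylor_coeff Cf 0 = 1" and "1 \<le> i \<Longrightarrow> i < t \<Longrightarrow> taylor_coeff Cf i = 0"
    and "taylor_coeff Cf t = coef_b f p v t" and "coef_b f p v t \<noteq> 0"
proof -
  show "taylor_coeff Cf 0 = 1" using Cf_0 by (simp add: taylor_coeff_def)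
  show "taylor_coeff Cf i = 0" if i: "1 \<le> i" "i < t"
  proof (cases "i + 1 \<le> k")
    case True
    then have "lj f p v (i + 1) = \<infinity>"
      using hpart_below_order[of "i + 1"] i by (simp add: lj_def vanish_order_def wc_wcoord wc_linear)
    then show ?thesis using lj_f_iff(2)[of "i + 1"] by simp
  next
    case False
    then have "1 < lj f p v (i + 1)" using cond3 i unfolding order_one_degree_def by auto
    then show ?thesis using lj_f_iff(2)[of "i + 1"] by simp
  qed
  have "lj f p v (t + 1) = 1" using cond3 unfolding order_one_degree_def by auto
  then show "taylor_coeff Cf t = coef_b f p v t" "coef_b f p v t \<noteq> 0"
    using lj_f_iff(1)[of "t + 1"] coef_b_f by auto
qed

lemma taylor_coeffs_beta:
  assumes cond1: "char_dir_degree f p k v s"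
  shows "enat j \<le> s \<Longrightarrow> taylor_coeff \<beta> j = 0" and "s = enat n \<Longrightarrow> taylor_coeff \<beta> (Suc n) \<noteq> 0"
proof -
  show "taylor_coeff \<beta> j = 0" if "enat j \<le> s"
    using that by (intro taylor_coeff_beta_eq_0 taylor_coeffs_B[OF cond1]) (meson enat_ord_simps(1) order_trans)
  show "taylor_coeff \<beta> (Suc n) \<noteq> 0" if "s = enat n"
    using taylor_coeff_beta_leading[of n] taylor_coeffs_B[OF cond1] that by auto
qed

lemma char_dir_degree_inverse:
  assumes "char_dir_degree f p k v s"
  shows "char_dir_degree g p k v s"
  unfolding char_dir_degree_def
  using taylor_coeffs_beta[OF assms] char_dir_iff_wc taylor_coeffs_on_line(4) by auto

lemma nondeg_degree_inverse:
  assumes cond1: "char_dir_degree f p k v s" and cond2: "nondeg_degree f p k v r"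
    and kr: "k < r" and rs: "enat r < s"
  shows "nondeg_degree g p k v r" and "coef_a g p v r = - coef_a f p v r"
proof -
  have s: "enat j \<le> s" if "j \<le> Suc r" for j
  proof -
    have "enat (Suc r) \<le> s" using rs by (simp add: Suc_ile_eq)
    then show ?thesis using that by (meson enat_ord_simps(1) order_trans)
  qed
  note \<beta>z = taylor_coeffs_beta(1)[OF cond1 s]
  have \<alpha>: "\<And>j. j \<le> r \<Longrightarrow> taylor_coeff \<alpha> j = (if j = 1 then 1 else 0)"
    "taylor_coeff \<alpha> (Suc r) = - coef_a f p v r"
    using taylor_coeffs_alpha[OF taylor_coeffs_B(1)[OF cond1 s] taylor_coeffs_A(1,2)[OF cond2]]
      kr k_ge_1 by auto
  show "nondeg_degree g p k v r"
    unfolding nondeg_degree_def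
    using degenerate_char_dir_iff nondegenerate_char_dir_iff taylor_coeffs_on_line(3,4) \<alpha> \<beta>z
      taylor_coeffs_A(3)[OF cond2] k_ge_1 by auto
  show "coef_a g p v r = - coef_a f p v r"
    using coef_a_eq_zc[of g r] taylor_coeffs_on_line(3,4)[of "r + 1"] \<alpha>(2) \<beta>z[of "r + 1"] by simp
qed

lemma order_one_degree_inverse:
  assumes cond1: "char_dir_degree f p k v s" and cond3: "order_one_degree f p k v t"
    and rs: "enat r < s" and kt: "k \<le> t" and tr: "t \<le> r"
  shows "order_one_degree g p k v t" and "coef_b g p v t = - coef_b f p v t"
proof -
  have s: "enat j \<le> s" if "j \<le> Suc t" for j
  proof -
    have "enat (Suc r) \<le> s" using rs by (simp add: Suc_ile_eq)
    then show ?thesis using that tr by (meson Suc_le_mono enat_ord_simps(1) order_trans)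
  qed
  note \<beta>z = taylor_coeffs_beta(1)[OF cond1 s]
  have t1: "1 \<le> t" using k_ge_1 kt by simp
  have \<gamma>: "\<And>j. j < t \<Longrightarrow> taylor_coeff \<gamma> j = (if j = 0 then 1 else 0)"
    "taylor_coeff \<gamma> t = - coef_b f p v t"
    using taylor_coeffs_gamma[OF gamma_A_Cf_bigO0 taylor_coeffs_Cf(1-3)[OF cond3] t1]
      \<beta>z taylor_coeffs_B(1)[OF cond1 s] by auto
  show "order_one_degree g p k v t"
    unfolding order_one_degree_def
    using lj_g_iff[of "t + 1"] lj_g_iff(2) \<beta>z \<gamma> taylor_coeffs_Cf(4)[OF cond3] k_ge_1
    by (auto simp: Suc_le_eq)
  show "coef_b g p v t = - coef_b f p v t" using coef_b_g \<gamma>(2) by simp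
qed

end

end

lemma inverse_pair_of_germs:
  assumes germf: "holo_germ_fixing f p" and fd: "(f has_derivative (\<lambda>x. x)) (at p)"
    and germg: "holo_germ_fixing g p" and gd: "(g has_derivative (\<lambda>x. x)) (at p)"
    and inv: "eventually (\<lambda>x. g (f x) = x) (nhds p)" and v0: "v \<noteq> 0"
  obtains U where "inverse_pair f g p v U"
proof -
  obtain Uf where Uf: "open Uf" "p \<in> Uf" "holo2_on Uf f" and fp: "f p = p"
    using germf unfolding holo_germ_fixing_def by blast
  obtain Ug where Ug: "open Ug" "p \<in> Ug" "holo2_on Ug g" and gp: "g p = p"
    using germg unfolding holo_germ_fixing_def by blast
  obtain S where S: "open S" "p \<in> S" "\<And>x. x \<in> S \<Longrightarrow> g (f x) = x"
    using inv unfolding eventually_nhds by blast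
  have "inverse_pair f g p v (Uf \<inter> Ug \<inter> S)"
    by unfold_locales (use Uf Ug S fp gp fd gd v0 in \<open>auto elim: holo2_on_subset\<close>)
  then show ?thesis by (rule that)
qed

section \<open>The director\<close>

lemma root_with_prescribed_power:
  fixes w :: complex
  assumes "t \<noteq> 0"
  obtains \<alpha> where "\<alpha> ^ (2 * t) = w\<^sup>2" "\<alpha> ^ t = w"
proof -
  obtain \<alpha> where "w = \<alpha> ^ t" using exists_complex_root[OF assms] by blast
  then show ?thesis by (intro that[of \<alpha>]) (simp_all add: power_mult mult.commute)
qed

text \<open>When \<open>r = 2t\<close>, the values \<open>\<alpha>\<^sup>t\<close> for \<open>\<alpha>\<^sup>r = c\<close> are the two square roots \<open>\<pm>w\<close> of \<open>c\<close>, and for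
  \<open>\<alpha>\<^sup>r = -c\<close> they are \<open>\<pm>i w\<close>; the real parts of \<open>b\<close> times these four numbers cannot all be \<open>\<le> 0\<close>.\<close>

lemma director_positive_for_a_or_minus_a:
  fixes a b :: complex
  assumes a: "a \<noteq> 0" and b: "b \<noteq> 0" and t: "t \<noteq> 0"
  shows "(\<exists>\<alpha>. \<alpha> ^ (2 * t) = - 1 / (a * of_nat (2 * t)) \<and> 0 < Re (- b * \<alpha> ^ t)) \<or>
         (\<exists>\<alpha>. \<alpha> ^ (2 * t) = - 1 / (- a * of_nat (2 * t)) \<and> 0 < Re (- (- b) * \<alpha> ^ t))"
proof (rule ccontr)
  assume H: "\<not> ?thesis"
  define c where "c = - 1 / (a * of_nat (2 * t))"
  have c0: "c \<noteq> 0" using a t by (simp add: c_def)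
  define w where "w = csqrt c"
  have w2: "w\<^sup>2 = c" by (simp add: w_def)
  have mc: "- 1 / (- a * of_nat (2 * t)) = - c" by (simp add: c_def)
  have f_side: "\<not> 0 < Re (- b * u)" if "u\<^sup>2 = c" for u
  proof -
    obtain \<alpha> where "\<alpha> ^ (2 * t) = u\<^sup>2" "\<alpha> ^ t = u" using root_with_prescribed_power[OF t] by blast
    then show ?thesis using H that unfolding c_def by auto
  qed
  have g_side: "\<not> 0 < Re (b * u)" if "u\<^sup>2 = - c" for u
  proof -
    obtain \<alpha> where "\<alpha> ^ (2 * t) = u\<^sup>2" "\<alpha> ^ t = u" using root_with_prescribed_power[OF t] by blast
    then show ?thesis using H that unfolding mc by auto
  qed
  have "Re (b * w) = 0" using f_side[of w] f_side[of "- w"] w2 by simp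
  moreover have "Im (b * w) = 0"
    using g_side[of "\<i> * w"] g_side[of "- \<i> * w"] w2 by (simp add: power_mult_distrib)
  ultimately have "b * w = 0" by (simp add: complex_eq_iff)
  then show False using b c0 w2 by auto
qed

lemma transv_attracting_inverse_iff:
  assumes "coef_a g p v r = - coef_a f p v r" "coef_b g p v r = - coef_b f p v r"
  shows "transv_attracting f p k r r v \<longleftrightarrow> transv_attracting g p k r r v"
  unfolding transv_attracting_def Let_def assms by simp

lemma transv_attracting_inverse_disj:
  assumes "coef_a g p v (2 * t) = - coef_a f p v (2 * t)" "coef_b g p v t = - coef_b f p v t"
    and "coef_a f p v (2 * t) \<noteq> 0" "coef_b f p v t \<noteq> 0" "t \<noteq> 0"
  shows "transv_attracting f p k (2 * t) t v \<or> transv_attracting g p k (2 * t) t v"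
  using director_positive_for_a_or_minus_a[OF assms(3-5)] assms(5)
  unfolding transv_attracting_def Let_def assms(1,2) by simp

theorem lemma3p1:
  fixes f g :: "c2 \<Rightarrow> c2" and p v :: c2 and k r t :: nat and s :: enat
  assumes germ: "holo_germ_fixing f p"
    and tangent: "(f has_derivative (\<lambda>x. x)) (at p)"
    and order: "has_order f p (k + 1)"
    and cond1: "char_dir_degree f p k v s"
    and cond2: "nondeg_degree f p k v r" and kr: "k < r" and rs: "enat r < s"
    and cond3: "order_one_degree f p k v t" and kt: "k \<le> t" and tr: "t \<le> r"
    and ginv_germ: "holo_germ_fixing g p"
    and ginv1: "eventually (\<lambda>x. g (f x) = x) (nhds p)"
    and ginv2: "eventually (\<lambda>x. f (g x) = x) (nhds p)"
  shows "(g has_derivative (\<lambda>x. x)) (at p) \<and> has_order g p (k + 1) \<and>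
         char_dir_degree g p k v s \<and> nondeg_degree g p k v r \<and> order_one_degree g p k v t \<and>
         (r = t \<longrightarrow> (transv_attracting f p k r t v \<longleftrightarrow> transv_attracting g p k r t v)) \<and>
         (r = 2 * t \<longrightarrow> transv_attracting f p k r t v \<or> transv_attracting g p k r t v)"
proof -
  have gd: "(g has_derivative (\<lambda>x. x)) (at p)"
    by (rule inverse_tangent_to_identity[OF ginv_germ tangent ginv2])
  have v0: "v \<noteq> 0" using cond2 unfolding nondeg_degree_def nondegenerate_char_dir_def by auto
  obtain U where inv: "inverse_pair f g p v U"
    using inverse_pair_of_germs[OF germ tangent ginv_germ gd ginv1 v0] by blast
  note nondeg_g = inverse_pair.nondeg_degree_inverse[OF inv order cond1 cond2 kr rs]
    inverse_pair.taylor_coeffs_A(3)[OF inv order cond2]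
  note order_one_g = inverse_pair.order_one_degree_inverse[OF inv order cond1 cond3 rs kt tr]
    inverse_pair.taylor_coeffs_Cf(4)[OF inv order cond3]
  have t0: "t \<noteq> 0" using inverse_pair.k_ge_1[OF inv order] kt by simp
  have "r = t \<longrightarrow> (transv_attracting f p k r t v \<longleftrightarrow> transv_attracting g p k r t v)"
    using transv_attracting_inverse_iff[of g p v r f k] nondeg_g(2) order_one_g(2) by blast
  moreover have "r = 2 * t \<longrightarrow> transv_attracting f p k r t v \<or> transv_attracting g p k r t v"
    using transv_attracting_inverse_disj[of g p v t f k] nondeg_g(2,3) order_one_g(2,3) t0 by blast
  ultimately show ?thesis
    using gd has_order_inverse[OF germ tangent ginv_germ gd ginv1 ginv2 order]
      inverse_pair.char_dir_degree_inverse[OF inv order cond1] nondeg_g(1) order_one_g(1) by blast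
qed

end
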